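(* Let $Y=(Y_1,\dots,Y_m)$ be obtained by applying dependent rounding with a fixed tournament tree (as in the context) to $y^*$, and let $C=\{F_i: Y_i=1\}$ (a set of exactly $k$ facilities). Then for every client $D_j$, $j\in[n]$, $$\mathbb{E}\Big[\sum_{i=1}^k \tfrac{1}{i}\,c^{\rightarrow}_i(C,j)\Big]\;\le\;2.3589\cdot \mathrm{OPT}^{LP}_j,\qquad\text{where } \mathrm{OPT}^{LP}_j=\sum_{\ell=1}^k\sum_{i=1}^m \tfrac1\ell\, x^{*\ell}_{ij}c_{ij}.$$
   Context: Instance: clients $D_1,\dots,D_n$, facilities $F_1,\dots,F_m$, nonnegative costs $c_{i,j}$, integer $k\le m$. For a $k$-set $C$ of facilities, $c^{\rightarrow}_1(C,j)\le\dots\le c^{\rightarrow}_k(C,j)$ are the costs $\{c_{i,j}:F_i\in C\}$ sorted non-decreasingly. Linear program: minimize $\sum_{j=1}^n\sum_{\ell=1}^k\sum_{i=1}^m \frac1\ell x^\ell_{ij}c_{ij}$ subject to $\sum_{i=1}^m y_i=k$; $\sum_{\ell=1}^k x^\ell_{ij}\le y_i$ for all $i,j$; $\sum_{i=1}^m x^\ell_{ij}\ge 1$ for all $j\in[n],\ell\in[k]$; $y_i,x^\ell_{ij}\in[0,1]$. Let $(x^*,y^* )$ be an optimal solution. Dependent rounding with a fixed tournament tree: fix a rooted binary tree with $m$ leaves, leaf $i$ holding variable $y_i$ initialized to $y^*_i$; repeatedly take two nonempty sibling nodes whose parent is empty. If both hold fractional variables $y_a,y_b$ with $s=y_a+y_b$: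 if $s\le1$, with probability $y_a/s$ set $(y_a,y_b)\leftarrow(s,0)$, else $(0,s)$; if $s>1$, with probability $(1-y_b)/(2-s)$ set $(y_a,y_b)\leftarrow(1,s-1)$, else $(s-1,1)$. A still-fractional variable is promoted to the parent; if both became integral a dummy $\bot$ is promoted; if one node holds $\bot$ (or an integral variable) the other node's content is promoted unchanged. $Y_i$ is the final (0/1) value of $y_i$. *)

theory Defs
  imports "HOL-Probability.Probability"
begin

text \<open>Facilities are indexed by i < m, clients by j < n, costs c i j.
  LP variables: y i (i < m) and x l i j (1 \<le> l \<le> k, i < m, j < n).\<close>

definition lp_feasible ::
  "nat \<Rightarrow> nat \<Rightarrow> nat \<Rightarrow> (nat \<Rightarrow> nat \<Rightarrow> nat \<Rightarrow> real) \<Rightarrow> (nat \<Rightarrow> real) \<Rightarrow> bool" where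
  "lp_feasible m n k x y \<longleftrightarrow>
     (\<Sum>i<m. y i) = real k \<and>
     (\<forall>i<m. \<forall>j<n. (\<Sum>l\<in>{1..k}. x l i j) \<le> y i) \<and>
     (\<forall>j<n. \<forall>l\<in>{1..k}. (\<Sum>i<m. x l i j) \<ge> 1) \<and>
     (\<forall>i<m. 0 \<le> y i \<and> y i \<le> 1) \<and>
     (\<forall>l\<in>{1..k}. \<forall>i<m. \<forall>j<n. 0 \<le> x l i j \<and> x l i j \<le> 1)"

definition lp_client_cost ::
  "nat \<Rightarrow> nat \<Rightarrow> (nat \<Rightarrow> nat \<Rightarrow> real) \<Rightarrow> (nat \<Rightarrow> nat \<Rightarrow> nat \<Rightarrow> real) \<Rightarrow> nat \<Rightarrow> real" where
  "lp_client_cost m k c x j = (\<Sum>l\<in>{1..k}. \<Sum>i<m. (1 / real l) * x l i j * c i j)"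

definition lp_obj ::
  "nat \<Rightarrow> nat \<Rightarrow> nat \<Rightarrow> (nat \<Rightarrow> nat \<Rightarrow> real) \<Rightarrow> (nat \<Rightarrow> nat \<Rightarrow> nat \<Rightarrow> real) \<Rightarrow> real" where
  "lp_obj m n k c x = (\<Sum>j<n. lp_client_cost m k c x j)"

definition lp_optimal ::
  "nat \<Rightarrow> nat \<Rightarrow> nat \<Rightarrow> (nat \<Rightarrow> nat \<Rightarrow> real) \<Rightarrow> (nat \<Rightarrow> nat \<Rightarrow> nat \<Rightarrow> real) \<Rightarrow> (nat \<Rightarrow> real) \<Rightarrow> bool" where
  "lp_optimal m n k c x y \<longleftrightarrow> lp_feasible m n k x y \<and>
     (\<forall>x' y'. lp_feasible m n k x' y' \<longrightarrow> lp_obj m n k c x \<le> lp_obj m n k c x')"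

text \<open>Rooted binary (tournament) trees; leaves carry facility indices.\<close>
datatype ttree = Leaf nat | Node ttree ttree

fun leaves :: "ttree \<Rightarrow> nat list" where
  "leaves (Leaf i) = [i]"
| "leaves (Node l r) = leaves l @ leaves r"

definition frac :: "real \<Rightarrow> bool" where
  "frac v \<longleftrightarrow> 0 < v \<and> v < 1"

text \<open>Content of a node: Some a = fractional variable y_a; None = dummy / integral.\<close>
definition promote :: "nat \<Rightarrow> nat \<Rightarrow> (nat \<Rightarrow> real) \<Rightarrow> nat option" where
  "promote a b y = (if frac (y a) then Some a else if frac (y b) then Some b else None)"

definition pair_step :: "nat \<Rightarrow> nat \<Rightarrow> (nat \<Rightarrow> real) \<Rightarrow> (nat option \<times> (nat \<Rightarrow> real)) pmf" where
  "pair_step a b y = (let s = y a + y b in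
     if s \<le> 1 then
       map_pmf (\<lambda>coin. let y' = (if coin then y(a := s, b := 0) else y(a := 0, b := s))
                       in (promote a b y', y')) (bernoulli_pmf (y a / s))
     else
       map_pmf (\<lambda>coin. let y' = (if coin then y(a := 1, b := s - 1) else y(a := s - 1, b := 1))
                       in (promote a b y', y')) (bernoulli_pmf ((1 - y b) / (2 - s))))"

definition combine :: "nat option \<Rightarrow> nat option \<Rightarrow> (nat \<Rightarrow> real) \<Rightarrow> (nat option \<times> (nat \<Rightarrow> real)) pmf" where
  "combine oa ob y = (case (oa, ob) of
      (Some a, Some b) \<Rightarrow> pair_step a b y
    | (Some a, None) \<Rightarrow> return_pmf (Some a, y)
    | (None, ob') \<Rightarrow> return_pmf (ob', y))"

text \<open>Bottom-up dependent rounding along the tree; returns the content promoted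
  to the root together with the current values of all variables.\<close>
fun dep_round :: "ttree \<Rightarrow> (nat \<Rightarrow> real) \<Rightarrow> (nat option \<times> (nat \<Rightarrow> real)) pmf" where
  "dep_round (Leaf i) y = return_pmf (if frac (y i) then Some i else None, y)"
| "dep_round (Node l r) y =
     bind_pmf (dep_round l y) (\<lambda>(a, y1).
       bind_pmf (dep_round r y1) (\<lambda>(b, y2). combine a b y2))"

definition rounded :: "ttree \<Rightarrow> (nat \<Rightarrow> real) \<Rightarrow> (nat \<Rightarrow> real) pmf" where
  "rounded T y = map_pmf snd (dep_round T y)"

text \<open>c^{\<rightarrow>}_l(C,j) for l = 1..|C| is  sorted_costs c C j ! (l-1).\<close>
definition sorted_costs :: "(nat \<Rightarrow> nat \<Rightarrow> real) \<Rightarrow> nat set \<Rightarrow> nat \<Rightarrow> real list" where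
  "sorted_costs c C j = sort (map (\<lambda>i. c i j) (sorted_list_of_set C))"

definition ordered_cost :: "(nat \<Rightarrow> nat \<Rightarrow> real) \<Rightarrow> nat \<Rightarrow> nat set \<Rightarrow> nat \<Rightarrow> real" where
  "ordered_cost c k C j = (\<Sum>l\<in>{1..k}. (1 / real l) * (sorted_costs c C j ! (l - 1)))"

end

theory Submission
  imports Defs
begin

text \<open>Fix the client \<open>j\<close> and let \<open>w\<^sub>0 < w\<^sub>1 < ...\<close> be its distinct facility costs.  Both sides
  split into layers.  The ordered cost of \<open>C\<close> is \<open>H\<^sub>k w\<^sub>0\<close> plus, for every gap between consecutive
  levels \<open>w\<^sub>s\<close>, that gap times \<open>H\<^sub>k - H\<^sub>X\<close>, where \<open>X\<close> counts the open facilities cheaper than \<open>w\<^sub>s\<close>; the LP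
  cost is at least \<open>H\<^sub>k w\<^sub>0\<close> plus every gap times the \<open>1/l\<close>-weighted LP mass that level \<open>l\<close> puts on
  facilities of cost at least \<open>w\<^sub>s\<close>.  So it suffices to bound one layer \<open>S\<close> at a time.

  Each pair step of the dependent rounding is a mean-preserving random move of two
  coordinates, so it cannot increase \<open>E h(N)\<close> for any convex \<open>h\<close>, where \<open>N\<close> is the number of
  successes of independent Bernoulli trials with the current probabilities on a fixed set.  Hence the
  rounded counts are dominated by independent trials.  Let \<open>\<mu>\<close> be the \<open>y\<^sup>*\<close>-mass of \<open>S\<close> and
  \<open>\<nu> = k - \<mu>\<close>.  If \<open>\<nu> \<le> 2.7\<close>, bound \<open>H\<^sub>k - H\<^sub>X\<close> by a convex quadratic in the count outside \<open>S\<close>;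
  otherwise bound \<open>E H\<^sub>N\<close> from below, through Hoeffding's comparison with the binomial
  distribution and the series of \<open>ln\<close>.  Elementary estimates against the three LP lower bounds
  \<open>\<nu>/k\<close>, \<open>H\<^sub>k - \<mu>\<close> and \<open>ln ((k+1)/(\<mu>+1))\<close> give the factor 2.3589.\<close>

section \<open>Expectations of functions of sums of independent Bernoulli variables\<close>

text \<open>The defining polynomial makes sense for all \<open>y\<close>, which is convenient for pair updates.\<close>
definition pbinom_exp :: "nat set \<Rightarrow> (nat \<Rightarrow> real) \<Rightarrow> (nat \<Rightarrow> real) \<Rightarrow> real" where
  "pbinom_exp S y h = (\<Sum>A\<in>Pow S. (\<Prod>i\<in>A. y i) * (\<Prod>i\<in>S - A. 1 - y i) * h (card A))"

definition second_diff :: "(nat \<Rightarrow> real) \<Rightarrow> nat \<Rightarrow> real" where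
  "second_diff h n = h (Suc (Suc n)) - 2 * h (Suc n) + h n"

lemma pbinom_exp_empty [simp]: "pbinom_exp {} y h = h 0"
  by (simp add: pbinom_exp_def)

lemma pbinom_exp_insert:
  assumes "finite S" "a \<notin> S"
  shows "pbinom_exp (insert a S) y h
    = y a * pbinom_exp S y (\<lambda>n. h (Suc n)) + (1 - y a) * pbinom_exp S y h"
proof -
  have disj: "Pow S \<inter> insert a ` Pow S = {}" and inj: "inj_on (insert a) (Pow S)"
    using assms by (auto simp: inj_on_def)
  have without_a: "(\<Sum>A\<in>Pow S. (\<Prod>i\<in>A. y i) * (\<Prod>i\<in>insert a S - A. 1 - y i) * h (card A))
      = (1 - y a) * pbinom_exp S y h"
    unfolding pbinom_exp_def sum_distrib_left
  proof (intro sum.cong refl)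
    fix A assume "A \<in> Pow S"
    then have "insert a S - A = insert a (S - A)" "a \<notin> S - A" using assms by auto
    then show "(\<Prod>i\<in>A. y i) * (\<Prod>i\<in>insert a S - A. 1 - y i) * h (card A)
        = (1 - y a) * ((\<Prod>i\<in>A. y i) * (\<Prod>i\<in>S - A. 1 - y i) * h (card A))"
      using assms by simp
  qed
  have with_a: "(\<Sum>A\<in>insert a ` Pow S. (\<Prod>i\<in>A. y i) * (\<Prod>i\<in>insert a S - A. 1 - y i) * h (card A))
      = y a * pbinom_exp S y (\<lambda>n. h (Suc n))"
    unfolding sum.reindex[OF inj] pbinom_exp_def sum_distrib_left comp_def
  proof (intro sum.cong refl)
    fix A assume A: "A \<in> Pow S"
    then have "finite A" "a \<notin> A" "insert a S - insert a A = S - A"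
      using assms finite_subset by auto
    then show "(\<Prod>i\<in>insert a A. y i) * (\<Prod>i\<in>insert a S - insert a A. 1 - y i) * h (card (insert a A))
        = y a * ((\<Prod>i\<in>A. y i) * (\<Prod>i\<in>S - A. 1 - y i) * h (Suc (card A)))"
      by simp
  qed
  show ?thesis
    unfolding pbinom_exp_def[of "insert a S"] Pow_insert
    using assms disj without_a with_a by (subst sum.union_disjoint) auto
qed

lemma pbinom_exp_remove:
  assumes "finite S" "a \<in> S"
  shows "pbinom_exp S y h
    = y a * pbinom_exp (S - {a}) y (\<lambda>n. h (Suc n)) + (1 - y a) * pbinom_exp (S - {a}) y h"
  using pbinom_exp_insert[of "S - {a}" a y h] assms by (simp add: insert_absorb)

lemma pbinom_exp_cong:
  assumes "\<And>i. i \<in> S \<Longrightarrow> y i = y' i"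
  shows "pbinom_exp S y h = pbinom_exp S y' h"
proof -
  have "(\<Prod>i\<in>A. y i) = (\<Prod>i\<in>A. y' i)" "(\<Prod>i\<in>S - A. 1 - y i) = (\<Prod>i\<in>S - A. 1 - y' i)"
    if "A \<in> Pow S" for A
    using that assms by (auto intro!: prod.cong)
  then show ?thesis unfolding pbinom_exp_def by (intro sum.cong) auto
qed

lemma pbinom_exp_linear:
  "pbinom_exp S y (\<lambda>n. a * f n + b * g n) = a * pbinom_exp S y f + b * pbinom_exp S y g"
  unfolding pbinom_exp_def by (simp add: sum.distrib sum_distrib_left algebra_simps)

lemma pbinom_exp_diff: "pbinom_exp S y (\<lambda>n. f n - g n) = pbinom_exp S y f - pbinom_exp S y g"
  using pbinom_exp_linear[of S y 1 f "-1" g] by simp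

lemma pbinom_exp_const: "finite S \<Longrightarrow> pbinom_exp S y (\<lambda>_. c) = c"
  by (induction S rule: finite_induct) (auto simp: pbinom_exp_insert algebra_simps)

lemma pbinom_exp_nonneg:
  assumes "\<And>i. i \<in> S \<Longrightarrow> 0 \<le> y i \<and> y i \<le> 1" "\<And>n. 0 \<le> f n"
  shows "0 \<le> pbinom_exp S y f"
  unfolding pbinom_exp_def using assms
  by (intro sum_nonneg mult_nonneg_nonneg prod_nonneg) (auto simp: subset_iff)

lemma pbinom_exp_mono:
  assumes "\<And>i. i \<in> S \<Longrightarrow> 0 \<le> y i \<and> y i \<le> 1" "\<And>n. f n \<le> g n"
  shows "pbinom_exp S y f \<le> pbinom_exp S y g"
  using pbinom_exp_nonneg[of S y "\<lambda>n. g n - f n"] assms by (simp add: pbinom_exp_diff)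

lemma pbinom_exp_integral:
  assumes "finite S" "\<And>i. i \<in> S \<Longrightarrow> y i \<in> {0, 1}"
  shows "pbinom_exp S y h = h (card {i\<in>S. y i = 1})"
  using assms
proof (induction S arbitrary: h rule: finite_induct)
  case (insert a S)
  then have "{i \<in> insert a S. y i = 1} = (if y a = 1 then insert a {i\<in>S. y i = 1} else {i\<in>S. y i = 1})"
    "a \<notin> {i\<in>S. y i = 1}" "finite {i\<in>S. y i = 1}"
    by auto
  moreover have "y a = 0" if "y a \<noteq> 1" using insert that by auto
  ultimately show ?case using insert by (auto simp: pbinom_exp_insert)
qed simp

lemma pbinom_exp_of_nat: "finite S \<Longrightarrow> pbinom_exp S y real = (\<Sum>i\<in>S. y i)"
proof (induction S rule: finite_induct)
  case (insert a S)
  then have "pbinom_exp S y (\<lambda>n. 1 * 1 + 1 * real n) = 1 + (\<Sum>i\<in>S. y i)"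
    by (subst pbinom_exp_linear) (simp add: pbinom_exp_const)
  with insert show ?case by (simp add: pbinom_exp_insert algebra_simps)
qed simp

lemma pbinom_exp_power:
  "finite S \<Longrightarrow> pbinom_exp S y (\<lambda>n. u ^ n) = (\<Prod>i\<in>S. 1 - (1 - u) * y i)"
proof (induction S rule: finite_induct)
  case (insert a S)
  have "pbinom_exp S y (\<lambda>n. u ^ Suc n) = u * pbinom_exp S y (\<lambda>n. u ^ n)"
    using pbinom_exp_linear[of S y u "\<lambda>n. u ^ n" 0] by simp
  with insert show ?case by (simp add: pbinom_exp_insert algebra_simps)
qed simp

lemma pbinom_exp_falling_factorial_le:
  assumes "finite S" "\<And>i. i \<in> S \<Longrightarrow> 0 \<le> y i"
  shows "pbinom_exp S y (\<lambda>n. real n * (real n - 1)) \<le> (\<Sum>i\<in>S. y i)\<^sup>2"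
  using assms
proof (induction S rule: finite_induct)
  case (insert a S)
  have shift: "pbinom_exp S y (\<lambda>n. real (Suc n) * (real (Suc n) - 1))
      = pbinom_exp S y (\<lambda>n. real n * (real n - 1)) + 2 * (\<Sum>i\<in>S. y i)"
    using pbinom_exp_linear[of S y 1 "\<lambda>n. real n * (real n - 1)" 2 real] pbinom_exp_of_nat insert
    by (simp add: algebra_simps)
  have IH: "pbinom_exp S y (\<lambda>n. real n * (real n - 1)) \<le> (\<Sum>i\<in>S. y i)\<^sup>2"
    using insert by auto
  have "0 \<le> y a" "0 \<le> (\<Sum>i\<in>S. y i)" using insert by (auto intro: sum_nonneg)
  then have "(\<Sum>i\<in>S. y i)\<^sup>2 + 2 * y a * (\<Sum>i\<in>S. y i) \<le> (\<Sum>i\<in>insert a S. y i)\<^sup>2"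
    using insert by (simp add: power2_eq_square algebra_simps)
  moreover have "pbinom_exp (insert a S) y (\<lambda>n. real n * (real n - 1))
      = pbinom_exp S y (\<lambda>n. real n * (real n - 1)) + 2 * y a * (\<Sum>i\<in>S. y i)"
    using insert shift by (simp add: pbinom_exp_insert algebra_simps)
  ultimately show ?case using IH by linarith
qed simp

lemma pbinom_exp_update_one:
  assumes "finite S" "a \<in> S" "b \<notin> S"
  shows "pbinom_exp S (y(a := u, b := w)) h
    = u * pbinom_exp (S - {a}) y (\<lambda>n. h (Suc n)) + (1 - u) * pbinom_exp (S - {a}) y h"
proof -
  have "pbinom_exp (S - {a}) (y(a := u, b := w)) g = pbinom_exp (S - {a}) y g" for g
    using assms by (intro pbinom_exp_cong) auto
  moreover have "a \<noteq> b" using assms by auto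
  ultimately show ?thesis using assms by (simp add: pbinom_exp_remove[of S a])
qed

lemma pbinom_exp_update_two:
  assumes "finite S" "a \<in> S" "b \<in> S" "a \<noteq> b"
  defines "R \<equiv> S - {a, b}"
  shows "pbinom_exp S (y(a := u, b := v)) h = u * v * pbinom_exp R y (\<lambda>n. h (Suc (Suc n)))
    + (u * (1 - v) + (1 - u) * v) * pbinom_exp R y (\<lambda>n. h (Suc n)) + (1 - u) * (1 - v) * pbinom_exp R y h"
proof -
  have "pbinom_exp R (y(a := u, b := v)) g = pbinom_exp R y g" for g
    unfolding R_def by (intro pbinom_exp_cong) auto
  moreover have "S - {a} - {b} = R" "b \<in> S - {a}" "finite (S - {a})" using assms by auto
  ultimately show ?thesis
    using assms by (simp add: pbinom_exp_remove[of S a] pbinom_exp_remove[of "S - {a}" b] algebra_simps)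
qed

text \<open>The sign of the curvature \<open>C\<close> is that of \<open>second_diff h\<close>: for convex \<open>h\<close> a random
  mean-preserving split of \<open>y a\<close> can only lower the expectation, while for concave \<open>h\<close> moving
  \<open>y a\<close> and \<open>y b\<close> towards each other can only raise it.\<close>
lemma pbinom_exp_pair_update:
  fixes y h :: "nat \<Rightarrow> real" and s :: real
  assumes "finite S" "a \<noteq> b"
  defines "C \<equiv> (if a \<in> S \<and> b \<in> S then pbinom_exp (S - {a, b}) y (second_diff h) else 0)"
  obtains A B where "\<And>u. pbinom_exp S (y(a := u, b := s - u)) h = A + B * u + C * (u * (s - u))"
    and "a \<in> S \<Longrightarrow> b \<in> S \<Longrightarrow> B = 0"
proof -
  define E where "E R d = pbinom_exp R y (\<lambda>n. h (n + d))" for R d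
  consider "a \<in> S" "b \<in> S" | "a \<in> S" "b \<notin> S" | "a \<notin> S" "b \<in> S" | "a \<notin> S" "b \<notin> S"
    by blast
  then show ?thesis
  proof cases
    case 1
    let ?R = "S - {a, b}"
    have C_eq: "C = E ?R 2 - 2 * E ?R 1 + E ?R 0"
      using 1 pbinom_exp_linear[of ?R y 1 "\<lambda>n. h (n + 2) - 2 * h (n + 1)" 1 h]
        pbinom_exp_linear[of ?R y 1 "\<lambda>n. h (n + 2)" "-2" "\<lambda>n. h (n + 1)"]
      unfolding C_def E_def second_diff_def by (simp add: numeral_2_eq_2)
    have "pbinom_exp S (y(a := u, b := s - u)) h = (E ?R 0 + s * (E ?R 1 - E ?R 0)) + 0 * u
        + (E ?R 2 - 2 * E ?R 1 + E ?R 0) * (u * (s - u))" for u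
      using pbinom_exp_update_two[OF assms(1) 1 assms(2), of y u "s - u" h] unfolding E_def
      by (simp add: numeral_2_eq_2 algebra_simps)
    then show ?thesis unfolding C_eq[symmetric] by (rule that) simp
  next
    case 2
    have "pbinom_exp S (y(a := u, b := s - u)) h
        = E (S - {a}) 0 + (E (S - {a}) 1 - E (S - {a}) 0) * u" for u
      using pbinom_exp_update_one[OF assms(1) 2] unfolding E_def by (simp add: algebra_simps)
    then show ?thesis using 2 C_def by (intro that) auto
  next
    case 3
    have "pbinom_exp S (y(a := u, b := s - u)) h
        = (E (S - {b}) 0 + s * (E (S - {b}) 1 - E (S - {b}) 0)) + (E (S - {b}) 0 - E (S - {b}) 1) * u" for u
      using pbinom_exp_update_one[OF assms(1) 3(2,1), of y "s - u" u h] assms(2)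
      unfolding E_def by (simp add: fun_upd_twist algebra_simps)
    then show ?thesis using 3 C_def by (intro that) auto
  next
    case 4
    then have "pbinom_exp S (y(a := u, b := s - u)) h = pbinom_exp S y h" for u
      by (intro pbinom_exp_cong) auto
    then show ?thesis using 4 C_def by (intro that[of "pbinom_exp S y h" 0]) auto
  qed
qed

lemma quadratic_mean_preserving_spread:
  fixes A B C s p u1 u2 :: real
  assumes "0 \<le> C" "0 \<le> p" "p \<le> 1"
  defines "u \<equiv> p * u1 + (1 - p) * u2"
  shows "p * (A + B * u1 + C * (u1 * (s - u1))) + (1 - p) * (A + B * u2 + C * (u2 * (s - u2)))
    \<le> A + B * u + C * (u * (s - u))"
proof -
  have "A + B * u + C * (u * (s - u))
      - (p * (A + B * u1 + C * (u1 * (s - u1))) + (1 - p) * (A + B * u2 + C * (u2 * (s - u2))))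
      = C * (p * (1 - p) * (u1 - u2)\<^sup>2)"
    unfolding u_def by (simp add: power2_eq_square algebra_simps)
  moreover have "0 \<le> C * (p * (1 - p) * (u1 - u2)\<^sup>2)" using assms by simp
  ultimately show ?thesis by linarith
qed

definition in_unit_cube :: "nat \<Rightarrow> (nat \<Rightarrow> real) \<Rightarrow> bool" where
  "in_unit_cube m y \<longleftrightarrow> (\<forall>i<m. 0 \<le> y i \<and> y i \<le> 1)"

definition pair_supermartingale :: "nat \<Rightarrow> ((nat \<Rightarrow> real) \<Rightarrow> real) \<Rightarrow> bool" where
  "pair_supermartingale m F \<longleftrightarrow> (\<forall>y a b p u1 u2. a < m \<longrightarrow> b < m \<longrightarrow> a \<noteq> b \<longrightarrow> in_unit_cube m y
     \<longrightarrow> 0 \<le> p \<longrightarrow> p \<le> 1 \<longrightarrow> p * u1 + (1 - p) * u2 = y a \<longrightarrow>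
     p * F (y(a := u1, b := y a + y b - u1)) + (1 - p) * F (y(a := u2, b := y a + y b - u2)) \<le> F y)"

lemma pair_supermartingale_pbinom_exp:
  assumes "finite S" "S \<subseteq> {..<m}" "\<And>n. 0 \<le> second_diff h n"
  shows "pair_supermartingale m (\<lambda>y. pbinom_exp S y h)"
  unfolding pair_supermartingale_def
proof (intro allI impI)
  fix y :: "nat \<Rightarrow> real" and a b p u1 u2
  assume ab: "a < m" "b < m" "a \<noteq> b" and y: "in_unit_cube m y"
    and p: "0 \<le> p" "p \<le> 1" and mean: "p * u1 + (1 - p) * u2 = y a"
  define s where "s = y a + y b"
  define C where "C = (if a \<in> S \<and> b \<in> S then pbinom_exp (S - {a, b}) y (second_diff h) else 0)"
  obtain A B where F: "\<And>u. pbinom_exp S (y(a := u, b := s - u)) h = A + B * u + C * (u * (s - u))"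
    using pbinom_exp_pair_update[OF assms(1) ab(3), where y=y and h=h and s=s] unfolding C_def by blast
  have "0 \<le> C"
    unfolding C_def using assms y by (auto simp: in_unit_cube_def intro!: pbinom_exp_nonneg)
  from quadratic_mean_preserving_spread[OF this p, of A B u1 s u2]
  have "p * pbinom_exp S (y(a := u1, b := s - u1)) h + (1 - p) * pbinom_exp S (y(a := u2, b := s - u2)) h
      \<le> pbinom_exp S (y(a := y a, b := s - y a)) h"
    unfolding F mean .
  then show "p * pbinom_exp S (y(a := u1, b := y a + y b - u1)) h
      + (1 - p) * pbinom_exp S (y(a := u2, b := y a + y b - u2)) h \<le> pbinom_exp S y h"
    by (simp add: s_def)
qed

lemma pbinom_exp_pair_balance:
  assumes "finite S" "a \<in> S" "b \<in> S" "a \<noteq> b"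
    and concave: "\<And>n. second_diff h n \<le> 0"
    and y: "\<And>i. i \<in> S \<Longrightarrow> 0 \<le> y i \<and> y i \<le> 1"
    and between: "y b \<le> q" "q \<le> y a"
  shows "pbinom_exp S (y(a := q, b := y a + y b - q)) h \<le> pbinom_exp S y h"
proof -
  define s where "s = y a + y b"
  define C where "C = pbinom_exp (S - {a, b}) y (second_diff h)"
  obtain A B where F: "\<And>u. pbinom_exp S (y(a := u, b := s - u)) h = A + B * u + C * (u * (s - u))"
    and "B = 0"
    using pbinom_exp_pair_update[OF assms(1,4), where y=y and h=h and s=s] assms(2,3)
    unfolding C_def by auto
  have "0 \<le> pbinom_exp (S - {a, b}) y (\<lambda>n. -1 * second_diff h n + 0 * h n)"
    using y concave by (intro pbinom_exp_nonneg) auto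
  then have "C \<le> 0" unfolding pbinom_exp_linear C_def by simp
  moreover have "y a * (s - y a) \<le> q * (s - q)"
    using mult_nonneg_nonneg[of "y a - q" "q - y b"] between by (simp add: s_def algebra_simps)
  ultimately have "C * (q * (s - q)) \<le> C * (y a * (s - y a))"
    by (rule mult_left_mono_neg[rotated])
  then have "pbinom_exp S (y(a := q, b := s - q)) h \<le> pbinom_exp S (y(a := y a, b := s - y a)) h"
    unfolding F \<open>B = 0\<close> by simp
  then show ?thesis by (simp add: s_def)
qed

lemma sum_update_pair:
  fixes y :: "'a \<Rightarrow> 'b::ab_group_add"
  assumes "finite L" "a \<in> L" "b \<in> L" "a \<noteq> b"
  shows "(\<Sum>i\<in>L. (y(a := u, b := w)) i) = (\<Sum>i\<in>L. y i) + (u - y a) + (w - y b)"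
proof -
  have "(y(a := u, b := w)) i = y i + (if i = a then u - y a else 0) + (if i = b then w - y b else 0)" for i
    using assms by auto
  then show ?thesis using assms by (simp add: sum.distrib)
qed

lemma exists_above_below_mean:
  fixes y :: "'a \<Rightarrow> real" and q :: real
  assumes "finite S" "(\<Sum>i\<in>S. y i) = q * card S" "\<exists>i\<in>S. y i \<noteq> q"
  shows "\<exists>a\<in>S. q < y a" "\<exists>b\<in>S. y b < q"
proof -
  have balanced: "(\<Sum>i\<in>S. y i - q) = 0" "(\<Sum>i\<in>S. q - y i) = 0"
    using assms(2) by (simp_all add: sum_subtractf)
  show "\<exists>a\<in>S. q < y a"
  proof (rule ccontr)
    assume "\<not> (\<exists>a\<in>S. q < y a)"
    then have "\<forall>i\<in>S. q - y i = 0"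
      using balanced(2) sum_nonneg_eq_0_iff[OF assms(1), of "\<lambda>i. q - y i"] by force
    then show False using assms(3) by auto
  qed
  show "\<exists>b\<in>S. y b < q"
  proof (rule ccontr)
    assume "\<not> (\<exists>b\<in>S. y b < q)"
    then have "\<forall>i\<in>S. y i - q = 0"
      using balanced(1) sum_nonneg_eq_0_iff[OF assms(1), of "\<lambda>i. y i - q"] by force
    then show False using assms(3) by auto
  qed
qed

text \<open>Hoeffding's comparison with the binomial distribution.  Each balancing step fixes one more
  coordinate at the mean.\<close>
lemma pbinom_exp_mean_le:
  fixes y :: "nat \<Rightarrow> real" and q :: real
  assumes "finite S" and concave: "\<And>n. second_diff h n \<le> 0"
    and "\<And>i. i \<in> S \<Longrightarrow> 0 \<le> y i \<and> y i \<le> 1" and "(\<Sum>i\<in>S. y i) = q * card S"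
  shows "pbinom_exp S (\<lambda>_. q) h \<le> pbinom_exp S y h"
  using assms(3,4)
proof (induction "card {i\<in>S. y i \<noteq> q}" arbitrary: y rule: less_induct)
  case less
  show ?case
  proof (cases "\<forall>i\<in>S. y i = q")
    case True
    then have "pbinom_exp S y h = pbinom_exp S (\<lambda>_. q) h" by (intro pbinom_exp_cong) auto
    then show ?thesis by simp
  next
    case False
    then obtain a b where a: "a \<in> S" "q < y a" and b: "b \<in> S" "y b < q"
      using exists_above_below_mean[OF assms(1) less.prems(2)] by blast
    have "a \<noteq> b" using a b by auto
    define y' where "y' = y(a := q, b := y a + y b - q)"
    have "{i\<in>S. y' i \<noteq> q} \<subseteq> {i\<in>S. y i \<noteq> q} - {a}" using a b unfolding y'_def by auto
    then have fewer: "card {i\<in>S. y' i \<noteq> q} < card {i\<in>S. y i \<noteq> q}"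
      using a assms(1) by (intro le_less_trans[OF card_mono card_Diff1_less]) auto
    have "(\<Sum>i\<in>S. y' i) = (\<Sum>i\<in>S. y i)"
      unfolding y'_def using sum_update_pair[OF assms(1) a(1) b(1) \<open>a \<noteq> b\<close>, of y q] by simp
    moreover have "0 \<le> y' i \<and> y' i \<le> 1" if "i \<in> S" for i
    proof -
      have "0 \<le> y b" "y a \<le> 1" using less.prems(1) a b by auto
      then show ?thesis using less.prems(1)[OF that] a b unfolding y'_def by auto
    qed
    ultimately have "pbinom_exp S (\<lambda>_. q) h \<le> pbinom_exp S y' h"
      using less.hyps[OF fewer] less.prems by simp
    also have "\<dots> \<le> pbinom_exp S y h"
      unfolding y'_def using pbinom_exp_pair_balance[OF assms(1) a(1) b(1) \<open>a \<noteq> b\<close> concave] less.prems a b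
      by simp
    finally show ?thesis .
  qed
qed

section \<open>Binomial expectations and harmonic numbers\<close>

definition binom_exp :: "nat \<Rightarrow> real \<Rightarrow> (nat \<Rightarrow> real) \<Rightarrow> real" where
  "binom_exp N p h = pbinom_exp {..<N} (\<lambda>_. p) h"

lemma binom_exp_0 [simp]: "binom_exp 0 p h = h 0"
  by (simp add: binom_exp_def)

lemma binom_exp_Suc:
  "binom_exp (Suc N) p h = p * binom_exp N p (\<lambda>n. h (Suc n)) + (1 - p) * binom_exp N p h"
  unfolding binom_exp_def lessThan_Suc by (subst pbinom_exp_insert) auto

lemma pbinom_exp_const_prob: "finite S \<Longrightarrow> pbinom_exp S (\<lambda>_. p) h = binom_exp (card S) p h"
  by (induction S arbitrary: h rule: finite_induct) (simp_all add: pbinom_exp_insert binom_exp_Suc)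

lemma binom_exp_linear:
  "binom_exp N p (\<lambda>n. a * f n + b * g n) = a * binom_exp N p f + b * binom_exp N p g"
  unfolding binom_exp_def by (rule pbinom_exp_linear)

lemma binom_exp_size_bias:
  "binom_exp (Suc N) p (\<lambda>n. real n * g n) = real (Suc N) * p * binom_exp N p (\<lambda>n. g (Suc n))"
proof (induction N arbitrary: g)
  case (Suc N)
  have shift: "binom_exp (Suc N) p (\<lambda>n. real (Suc n) * g (Suc n))
      = binom_exp (Suc N) p (\<lambda>n. g (Suc n)) + binom_exp (Suc N) p (\<lambda>n. real n * g (Suc n))"
    using binom_exp_linear[of "Suc N" p 1 "\<lambda>n. g (Suc n)" 1 "\<lambda>n. real n * g (Suc n)"]
    by (simp add: algebra_simps)
  have "binom_exp (Suc (Suc N)) p (\<lambda>n. real n * g n)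
      = p * binom_exp (Suc N) p (\<lambda>n. real (Suc n) * g (Suc n))
        + (1 - p) * binom_exp (Suc N) p (\<lambda>n. real n * g n)"
    by (simp add: binom_exp_Suc)
  also have "\<dots> = p * binom_exp (Suc N) p (\<lambda>n. g (Suc n)) + real (Suc N) * p
      * (p * binom_exp N p (\<lambda>n. g (Suc (Suc n))) + (1 - p) * binom_exp N p (\<lambda>n. g (Suc n)))"
    unfolding shift Suc.IH[of "\<lambda>n. g (Suc n)"] Suc.IH[of g] by (simp add: algebra_simps)
  also have "\<dots> = real (Suc (Suc N)) * p * binom_exp (Suc N) p (\<lambda>n. g (Suc n))"
    by (simp add: binom_exp_Suc algebra_simps)
  finally show ?case .
qed (simp add: binom_exp_Suc)

lemma binom_exp_inverse_Suc:
  "real (Suc N) * p * binom_exp N p (\<lambda>n. 1 / real (Suc n)) = 1 - (1 - p) ^ Suc N"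
proof -
  have "binom_exp (Suc N) p (\<lambda>n. real n * (1 / real n)) = binom_exp (Suc N) p (\<lambda>n. 1 - 0 ^ n)"
    by (rule arg_cong[where f = "binom_exp _ _"]) (auto simp: fun_eq_iff)
  also have "\<dots> = 1 - (1 - p) ^ Suc N"
    using binom_exp_linear[of "Suc N" p 1 "\<lambda>_. 1" "-1" "\<lambda>n. 0 ^ n"]
    by (simp add: binom_exp_def pbinom_exp_const pbinom_exp_power)
  finally show ?thesis using binom_exp_size_bias[of N p "\<lambda>n. 1 / real n"] by simp
qed

lemma harm_eq_sum_divide: "harm k = (\<Sum>l\<in>{1..k}. 1 / real l)"
  by (simp add: harm_def inverse_eq_divide)

lemma harm_Suc_divide: "harm (Suc n) = harm n + 1 / (real n + 1)"
  by (simp add: harm_Suc inverse_eq_divide add.commute)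

lemma binom_exp_harm: "binom_exp N p harm = (\<Sum>i\<in>{1..N}. (1 - (1 - p) ^ i) / real i)"
proof (induction N)
  case (Suc N)
  have "binom_exp (Suc N) p harm = p * binom_exp N p (\<lambda>n. 1 * harm n + 1 * (1 / real (Suc n)))
      + (1 - p) * binom_exp N p harm"
    by (simp add: binom_exp_Suc harm_Suc_divide add.commute)
  also have "\<dots> = binom_exp N p harm + (1 - (1 - p) ^ Suc N) / real (Suc N)"
    unfolding binom_exp_linear using binom_exp_inverse_Suc[of N p]
    by (simp add: field_simps del: of_nat_Suc)
  finally show ?case using Suc by simp
qed (simp add: harm_def)

lemma sum_power_divide_le_minus_ln:
  fixes t :: real
  assumes "0 \<le> t" "t < 1"
  shows "(\<Sum>i\<in>{1..N}. t ^ i / real i) \<le> - ln (1 - t)"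
proof -
  have s: "(\<lambda>n. t ^ n / real n) sums (- ln (1 - t))"
    using sums_minus[OF ln_series'[of "-t"]] assms by simp
  have "(\<Sum>i\<in>{1..N}. t ^ i / real i) = (\<Sum>i<Suc N. t ^ i / real i)"
    by (rule sum.mono_neutral_left) (auto simp: atLeast1_atMost_eq_remove0)
  also have "\<dots> \<le> - ln (1 - t)"
    using s assms by (intro sum_le_suminf[OF sums_summable[OF s], THEN order_trans])
      (auto simp: sums_unique[OF s])
  finally show ?thesis .
qed

lemma binom_exp_harm_ge:
  assumes "0 < p" "p \<le> 1"
  shows "harm N + ln p \<le> binom_exp N p harm"
proof -
  have "binom_exp N p harm = harm N - (\<Sum>i\<in>{1..N}. (1 - p) ^ i / real i)"
    by (simp add: binom_exp_harm harm_eq_sum_divide diff_divide_distrib sum_subtractf)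
  moreover have "(\<Sum>i\<in>{1..N}. (1 - p) ^ i / real i) \<le> - ln (1 - (1 - p))"
    using assms by (intro sum_power_divide_le_minus_ln) auto
  ultimately show ?thesis by simp
qed

lemma second_diff_harm: "second_diff harm n \<le> 0"
proof -
  have "1 / (real n + 2) \<le> 1 / (real n + 1)" by (intro divide_left_mono) auto
  then show ?thesis
    by (simp add: second_diff_def harm_Suc_divide add.commute add.left_commute)
qed

lemma pbinom_exp_harm_ge_ln:
  assumes "finite S" "\<And>i. i \<in> S \<Longrightarrow> 0 \<le> y i \<and> y i \<le> 1" "0 < (\<Sum>i\<in>S. y i)"
  shows "harm (card S) + ln ((\<Sum>i\<in>S. y i) / card S) \<le> pbinom_exp S y harm"
proof -
  define p where "p = (\<Sum>i\<in>S. y i) / card S"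
  have N: "0 < card S" using assms by (auto simp: card_gt_0_iff)
  have "(\<Sum>i\<in>S. y i) \<le> (\<Sum>i\<in>S. 1)" using assms by (intro sum_mono) auto
  then have "0 < p" "p \<le> 1" using N assms unfolding p_def by (auto simp: divide_le_eq)
  then have "harm (card S) + ln p \<le> pbinom_exp S (\<lambda>_. p) harm"
    using binom_exp_harm_ge pbinom_exp_const_prob[OF assms(1)] by simp
  also have "\<dots> \<le> pbinom_exp S y harm"
    using pbinom_exp_mean_le[OF assms(1) second_diff_harm assms(2)] N unfolding p_def by simp
  finally show ?thesis unfolding p_def .
qed

lemma pbinom_exp_harm_ge_mean_div:
  assumes "finite S" "\<And>i. i \<in> S \<Longrightarrow> 0 \<le> y i \<and> y i \<le> 1"
  defines "\<mu> \<equiv> \<Sum>i\<in>S. y i"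
  shows "\<mu> / (1 + \<mu>) \<le> pbinom_exp S y harm"
proof -
  have "0 \<le> \<mu>" unfolding \<mu>_def using assms by (intro sum_nonneg) auto
  have "1 - 0 ^ n \<le> (harm n :: real)" for n
  proof (cases n)
    case (Suc n')
    then show ?thesis using harm_mono[of 1 n, where 'a=real] by (simp add: harm_def)
  qed (simp add: harm_def)
  then have "pbinom_exp S y (\<lambda>n. 1 - 0 ^ n) \<le> pbinom_exp S y harm"
    using assms by (intro pbinom_exp_mono) auto
  moreover have "pbinom_exp S y (\<lambda>n. 1 - 0 ^ n) = 1 - (\<Prod>i\<in>S. 1 - y i)"
    using pbinom_exp_diff[of S y "\<lambda>_. 1"] pbinom_exp_const pbinom_exp_power[of S y 0] assms(1)
    by simp
  moreover have "(\<Prod>i\<in>S. 1 - y i) \<le> (\<Prod>i\<in>S. exp (- y i))"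
    using assms(2) exp_ge_add_one_self[of "- y _"] by (intro prod_mono) simp
  moreover have "(\<Prod>i\<in>S. exp (- y i)) = exp (- \<mu>)"
    unfolding \<mu>_def using exp_sum[OF assms(1), of "\<lambda>i. - y i"] by (simp add: sum_negf)
  moreover have "exp (- \<mu>) \<le> 1 / (1 + \<mu>)"
    using \<open>0 \<le> \<mu>\<close> exp_ge_add_one_self[of \<mu>] by (simp add: exp_minus divide_simps)
  moreover have "1 - 1 / (1 + \<mu>) = \<mu> / (1 + \<mu>)" using \<open>0 \<le> \<mu>\<close> by (simp add: field_simps)
  ultimately show ?thesis by linarith
qed

lemma harm_minus_ln_Suc_mono: "m \<le> n \<Longrightarrow> harm m - ln (real m + 1) \<le> harm n - ln (real n + 1)"
proof (induction n)
  case (Suc n)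
  have "1 + 1 / (real n + 1) = (real n + 2) / (real n + 1)" by (simp add: field_simps)
  then have "ln (real n + 2) - ln (real n + 1) = ln (1 + 1 / (real n + 1))" by (simp add: ln_div)
  also have "\<dots> \<le> 1 / (real n + 1)" by (intro ln_add_one_self_le_self) auto
  finally have "harm n - ln (real n + 1) \<le> harm (Suc n) - ln (real (Suc n) + 1)"
    by (simp add: harm_Suc_divide add.commute)
  with Suc show ?case by (cases "m = Suc n") auto
qed simp

lemma harm_diff_le_ln:
  assumes "1 \<le> N" "1 \<le> k"
  shows "harm k - harm N + ln (real N) \<le> ln (real k + 1)"
proof (cases "k \<le> N")
  case True
  have "ln (real N) \<le> ln (real N + 1)" using assms by simp
  then show ?thesis using harm_minus_ln_Suc_mono[OF True] by simp
next
  case False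
  then have "harm k - ln (real k) \<le> harm N - ln (real N)"
    using euler_mascheroni_sequence_decreasing[of N k] assms by simp
  moreover have "ln (real k) \<le> ln (real k + 1)" using assms by simp
  ultimately show ?thesis by simp
qed

section \<open>Dependent rounding\<close>

lemma finite_set_pmf_pair_step: "finite (set_pmf (pair_step a b y))"
  unfolding pair_step_def Let_def by auto

lemma finite_set_pmf_combine: "finite (set_pmf (combine oa ob y))"
  unfolding combine_def by (auto split: option.split simp: finite_set_pmf_pair_step)

lemma finite_set_pmf_dep_round: "finite (set_pmf (dep_round T y))"
  by (induction T arbitrary: y) (auto simp: finite_set_pmf_combine split: prod.splits)

lemma finite_set_pmf_rounded: "finite (set_pmf (rounded T y))"
  unfolding rounded_def by (simp add: finite_set_pmf_dep_round)

lemma pmf_expectation_bind_le: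
  fixes p :: "'a pmf" and f :: "'a \<Rightarrow> 'b pmf" and h :: "'b \<Rightarrow> real"
  assumes "finite (set_pmf p)" "\<And>x. x \<in> set_pmf p \<Longrightarrow> finite (set_pmf (f x))"
    "\<And>x. x \<in> set_pmf p \<Longrightarrow> measure_pmf.expectation (f x) h \<le> g x"
  shows "measure_pmf.expectation (bind_pmf p f) h \<le> measure_pmf.expectation p g"
proof -
  have "measure_pmf.expectation (bind_pmf p f) h
      = (\<Sum>a\<in>set_pmf p. pmf p a *\<^sub>R measure_pmf.expectation (f a) h)"
    using assms by (intro pmf_expectation_bind) auto
  also have "\<dots> \<le> (\<Sum>a\<in>set_pmf p. pmf p a *\<^sub>R g a)"
    using assms by (intro sum_mono) (auto intro: mult_left_mono)
  also have "\<dots> = measure_pmf.expectation p g"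
    using assms by (intro integral_measure_pmf[symmetric]) auto
  finally show ?thesis .
qed

lemma pair_step_expectation_le:
  assumes "pair_supermartingale m F" "a < m" "b < m" "a \<noteq> b" "in_unit_cube m y"
  shows "measure_pmf.expectation (pair_step a b y) (\<lambda>x. F (snd x)) \<le> F y"
proof -
  have y: "0 \<le> y a" "y a \<le> 1" "0 \<le> y b" "y b \<le> 1" using assms unfolding in_unit_cube_def by auto
  have split: "p * F (y(a := u1, b := y a + y b - u1)) + (1 - p) * F (y(a := u2, b := y a + y b - u2)) \<le> F y"
    if "0 \<le> p" "p \<le> 1" "p * u1 + (1 - p) * u2 = y a" for p u1 u2
    using assms that unfolding pair_supermartingale_def by blast
  define s where "s = y a + y b"
  show ?thesis
  proof (cases "s \<le> 1")
    case True
    define p where "p = y a / s"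
    have p: "0 \<le> p" "p \<le> 1" unfolding p_def s_def using y by (auto simp: divide_le_eq)
    have "p * s + (1 - p) * 0 = y a" using y unfolding p_def s_def by (cases "y a + y b = 0") auto
    from split[OF p this]
    show ?thesis unfolding pair_step_def Let_def s_def[symmetric] p_def[symmetric] using True p
      by (simp add: s_def algebra_simps)
  next
    case False
    define p where "p = (1 - y b) / (2 - s)"
    have p: "0 \<le> p" "p \<le> 1" unfolding p_def s_def using y by (auto simp: divide_le_eq)
    have "p * 1 + (1 - p) * (s - 1) = y a"
    proof (cases "s = 2")
      case False
      then have "p * (2 - s) = 1 - y b" unfolding p_def by simp
      then show ?thesis unfolding s_def by (simp add: algebra_simps)
    qed (use y s_def in auto)
    from split[OF p this]
    show ?thesis unfolding pair_step_def Let_def s_def[symmetric] p_def[symmetric] using False p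
      by (simp add: s_def algebra_simps)
  qed
qed

lemma not_frac_iff:
  assumes "0 \<le> v" "v \<le> 1"
  shows "\<not> frac v \<longleftrightarrow> v \<in> {0, 1}"
  using assms unfolding frac_def by auto

lemma pair_step_outcome:
  assumes "frac (y a)" "frac (y b)" "(o', y') \<in> set_pmf (pair_step a b y)"
  obtains u w where "y' = y(a := u, b := w)" "u + w = y a + y b" "0 \<le> u" "u \<le> 1" "0 \<le> w" "w \<le> 1"
    "u \<in> {0, 1} \<or> w \<in> {0, 1}" "o' = promote a b y'"
proof -
  have "0 < y a" "y a < 1" "0 < y b" "y b < 1" using assms(1,2) unfolding frac_def by auto
  moreover obtain coin where "(o', y') = (let y' = (if y a + y b \<le> 1
      then (if coin then y(a := y a + y b, b := 0) else y(a := 0, b := y a + y b))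
      else (if coin then y(a := 1, b := y a + y b - 1) else y(a := y a + y b - 1, b := 1)))
      in (promote a b y', y'))"
    using assms(3) unfolding pair_step_def Let_def by (auto split: if_splits)
  ultimately show ?thesis
    by (cases coin; cases "y a + y b \<le> 1") (auto simp: Let_def intro!: that)
qed

lemma promote_content:
  assumes "a \<noteq> b" "0 \<le> y a" "y a \<le> 1" "0 \<le> y b" "y b \<le> 1" "y a \<in> {0, 1} \<or> y b \<in> {0, 1}"
  shows "\<forall>i\<in>{a, b}. promote a b y \<noteq> Some i \<longrightarrow> y i \<in> {0, 1}"
    and "\<forall>c. promote a b y = Some c \<longrightarrow> c \<in> {a, b} \<and> frac (y c)"
  using assms not_frac_iff[of "y a"] not_frac_iff[of "y b"] unfolding promote_def by auto

definition round_invariant ::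
  "nat \<Rightarrow> nat set \<Rightarrow> (nat \<Rightarrow> real) \<Rightarrow> nat option \<Rightarrow> (nat \<Rightarrow> real) \<Rightarrow> bool" where
  "round_invariant m L y oc y' \<longleftrightarrow> in_unit_cube m y' \<and> (\<forall>i. i \<notin> L \<longrightarrow> y' i = y i) \<and>
     (\<Sum>i\<in>L. y' i) = (\<Sum>i\<in>L. y i) \<and>
     (\<forall>i\<in>L. oc \<noteq> Some i \<longrightarrow> y' i \<in> {0, 1}) \<and> (\<forall>c. oc = Some c \<longrightarrow> c \<in> L \<and> frac (y' c))"

lemma pair_step_round_invariant:
  assumes "finite L" "a \<in> L" "b \<in> L" "a \<noteq> b" "frac (y a)" "frac (y b)" "in_unit_cube m y"
    and "\<And>i. i \<in> L - {a, b} \<Longrightarrow> y i \<in> {0, 1}" and "(o', y') \<in> set_pmf (pair_step a b y)"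
  shows "round_invariant m L y o' y'"
proof -
  obtain u w where y': "y' = y(a := u, b := w)" and uw: "u + w = y a + y b"
    "0 \<le> u" "u \<le> 1" "0 \<le> w" "w \<le> 1" "u \<in> {0, 1} \<or> w \<in> {0, 1}" and o': "o' = promote a b y'"
    using pair_step_outcome[OF assms(5,6,9)] by metis
  have "y' a = u" "y' b = w" using y' assms(4) by auto
  note content = promote_content[of a b y', unfolded this, OF assms(4) uw(2-6), folded o']
  have "in_unit_cube m y'" using assms(7) uw unfolding y' in_unit_cube_def by auto
  moreover have "(\<Sum>i\<in>L. y' i) = (\<Sum>i\<in>L. y i)"
    using sum_update_pair[OF assms(1-4), of y u w] uw(1) unfolding y' by simp
  moreover have "y' i \<in> {0, 1}" if "i \<in> L" "o' \<noteq> Some i" for i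
  proof (cases "i \<in> {a, b}")
    case False
    then show ?thesis using assms(8) that unfolding y' by auto
  qed (use content(1) that in blast)
  ultimately show ?thesis using content(2) assms(2,3) unfolding round_invariant_def y' by auto
qed

lemma combine_invariant:
  assumes disj: "Ll \<inter> Lr = {}" and fin: "finite Ll" "finite Lr"
    and il: "round_invariant m Ll y oa y1" and ir: "round_invariant m Lr y1 ob y2"
    and x: "(o', y3) \<in> set_pmf (combine oa ob y2)"
  shows "round_invariant m (Ll \<union> Lr) y o' y3"
proof -
  let ?L = "Ll \<union> Lr"
  have cube: "in_unit_cube m y2" using ir unfolding round_invariant_def by simp
  have outside: "\<forall>i. i \<notin> ?L \<longrightarrow> y2 i = y i"
    and y2_Ll: "\<And>i. i \<in> Ll \<Longrightarrow> y2 i = y1 i" and y1_Lr: "\<And>i. i \<in> Lr \<Longrightarrow> y1 i = y i"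
    using il ir disj unfolding round_invariant_def by auto
  have "(\<Sum>i\<in>?L. y2 i) = (\<Sum>i\<in>Ll. y1 i) + (\<Sum>i\<in>Lr. y2 i)"
    using fin disj y2_Ll by (simp add: sum.union_disjoint)
  also have "\<dots> = (\<Sum>i\<in>Ll. y i) + (\<Sum>i\<in>Lr. y i)"
    using il ir y1_Lr unfolding round_invariant_def by simp
  finally have sum: "(\<Sum>i\<in>?L. y2 i) = (\<Sum>i\<in>?L. y i)" using fin disj by (simp add: sum.union_disjoint)
  have integral: "\<And>i. i \<in> ?L \<Longrightarrow> oa \<noteq> Some i \<Longrightarrow> ob \<noteq> Some i \<Longrightarrow> y2 i \<in> {0, 1}"
    and frac_a: "\<And>a. oa = Some a \<Longrightarrow> a \<in> Ll \<and> frac (y2 a)"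
    and frac_b: "\<And>b. ob = Some b \<Longrightarrow> b \<in> Lr \<and> frac (y2 b)"
    using il ir disj y2_Ll unfolding round_invariant_def by (auto simp del: insert_iff)
  show ?thesis
  proof (cases oa)
    case None
    then show ?thesis using x cube outside sum integral frac_b
      unfolding combine_def round_invariant_def by auto
  next
    case (Some a)
    show ?thesis
    proof (cases ob)
      case None
      then show ?thesis using x \<open>oa = Some a\<close> cube outside sum integral frac_a
        unfolding combine_def round_invariant_def by auto
    next
      case (Some b)
      have a: "a \<in> Ll" "frac (y2 a)" and b: "b \<in> Lr" "frac (y2 b)"
        using frac_a[OF \<open>oa = Some a\<close>] frac_b[OF Some] by auto
      then have "a \<noteq> b" using disj by auto
      have "(o', y3) \<in> set_pmf (pair_step a b y2)" using x \<open>oa = Some a\<close> Some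
        by (simp add: combine_def)
      then have "round_invariant m ?L y2 o' y3"
        using pair_step_round_invariant[of ?L a b y2 m o' y3] fin a b \<open>a \<noteq> b\<close> cube integral
          \<open>oa = Some a\<close> Some
        by auto
      then show ?thesis using outside sum unfolding round_invariant_def by auto
qed
  qed
qed

lemma dep_round_invariant:
  assumes "distinct (leaves T)" "set (leaves T) \<subseteq> {..<m}" "in_unit_cube m y" "(oc, y') \<in> set_pmf (dep_round T y)"
  shows "round_invariant m (set (leaves T)) y oc y'"
  using assms
proof (induction T arbitrary: y oc y')
  case (Leaf i)
  then show ?case
    using not_frac_iff[of "y i"] unfolding round_invariant_def in_unit_cube_def by auto
next
  case (Node l r)
  from Node.prems(4) obtain a y1 b y2 where
    l: "(a, y1) \<in> set_pmf (dep_round l y)" and r: "(b, y2) \<in> set_pmf (dep_round r y1)"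
    and c: "(oc, y') \<in> set_pmf (combine a b y2)"
    by (auto split: prod.splits)
  have il: "round_invariant m (set (leaves l)) y a y1" using Node l by simp
  then have "in_unit_cube m y1" unfolding round_invariant_def by simp
  then have ir: "round_invariant m (set (leaves r)) y1 b y2" using Node r by simp
  show ?case using combine_invariant[OF _ _ _ il ir c] Node.prems by auto
qed

lemma combine_expectation_le:
  assumes "pair_supermartingale m F" "in_unit_cube m y"
    and "\<And>a b. oa = Some a \<Longrightarrow> ob = Some b \<Longrightarrow> a < m \<and> b < m \<and> a \<noteq> b"
  shows "measure_pmf.expectation (combine oa ob y) (\<lambda>x. F (snd x)) \<le> F y"
  using assms pair_step_expectation_le[OF assms(1) _ _ _ assms(2)]
  by (cases oa; cases ob) (auto simp: combine_def)

lemma dep_round_expectation_le: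
  assumes "pair_supermartingale m F" "distinct (leaves T)" "set (leaves T) \<subseteq> {..<m}" "in_unit_cube m y"
  shows "measure_pmf.expectation (dep_round T y) (\<lambda>x. F (snd x)) \<le> F y"
  using assms(2-4)
proof (induction T arbitrary: y)
  case (Node l r)
  have "measure_pmf.expectation (dep_round (Node l r) y) (\<lambda>x. F (snd x))
      \<le> measure_pmf.expectation (dep_round l y) (\<lambda>x. F (snd x))"
    unfolding dep_round.simps
  proof (rule pmf_expectation_bind_le[OF finite_set_pmf_dep_round], goal_cases)
    case (1 x)
    then show ?case
      by (auto split: prod.splits simp: finite_set_pmf_dep_round finite_set_pmf_combine)
  next
    case (2 x)
    obtain a y1 where x: "x = (a, y1)" by (cases x)
    have il: "round_invariant m (set (leaves l)) y a y1"
      using dep_round_invariant 2 Node.prems x by simp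
    then have cube1: "in_unit_cube m y1" unfolding round_invariant_def by simp
    have "measure_pmf.expectation (dep_round r y1 \<bind> (\<lambda>(b, y2). combine a b y2)) (\<lambda>x. F (snd x))
        \<le> measure_pmf.expectation (dep_round r y1) (\<lambda>x. F (snd x))"
    proof (rule pmf_expectation_bind_le[OF finite_set_pmf_dep_round], goal_cases)
      case (1 x')
      then show ?case by (auto split: prod.splits simp: finite_set_pmf_combine)
    next
      case (2 x')
      obtain b y2 where x': "x' = (b, y2)" by (cases x')
      have ir: "round_invariant m (set (leaves r)) y1 b y2"
        using dep_round_invariant 2 Node.prems cube1 x' by simp
      have "measure_pmf.expectation (combine a b y2) (\<lambda>x. F (snd x)) \<le> F y2"
      proof (rule combine_expectation_le[OF assms(1)])
        show "in_unit_cube m y2" using ir unfolding round_invariant_def by simp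
        fix a' b' assume "a = Some a'" "b = Some b'"
        then have "a' \<in> set (leaves l)" "b' \<in> set (leaves r)"
          using il ir unfolding round_invariant_def by auto
        then show "a' < m \<and> b' < m \<and> a' \<noteq> b'" using Node.prems by auto
      qed
      then show ?case unfolding x' by simp
    qed
    also have "\<dots> \<le> F y1" using Node.IH(2) Node.prems cube1 by simp
    finally show ?case unfolding x by simp
  qed
  also have "\<dots> \<le> F y" using Node.IH(1) Node.prems by simp
  finally show ?case .
qed simp

lemma rounded_expectation_le:
  assumes "pair_supermartingale m F" "distinct (leaves T)" "set (leaves T) \<subseteq> {..<m}" "in_unit_cube m y"
  shows "measure_pmf.expectation (rounded T y) F \<le> F y"
  using dep_round_expectation_le[OF assms] unfolding rounded_def by simp

lemma sum_indicator_eq_card: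
  fixes Y :: "'a \<Rightarrow> real"
  assumes "finite L" "\<And>i. i \<in> L \<Longrightarrow> Y i \<in> {0, 1}"
  shows "(\<Sum>i\<in>L. Y i) = card {i\<in>L. Y i = 1}"
proof -
  have "(\<Sum>i\<in>L. Y i) = (\<Sum>i\<in>L. if Y i = 1 then 1 else 0)"
    using assms by (intro sum.cong) auto
  then show ?thesis using assms by (simp add: sum.If_cases Int_def conj_commute)
qed

text \<open>The last fractional variable cannot survive at the root: the total mass \<open>k\<close> is an integer.\<close>
lemma rounded_integral:
  assumes "distinct (leaves T)" "set (leaves T) = {..<m}" "in_unit_cube m y" "(\<Sum>i<m. y i) = real k"
    and "Y \<in> set_pmf (rounded T y)"
  shows "in_unit_cube m Y" "\<And>i. i < m \<Longrightarrow> Y i \<in> {0, 1}" "card {i. i < m \<and> Y i = 1} = k"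
proof -
  obtain oc where "(oc, Y) \<in> set_pmf (dep_round T y)" using assms(5) unfolding rounded_def by auto
  then have inv: "round_invariant m {..<m} y oc Y" using dep_round_invariant assms(1-3) by (metis order_refl)
  then show "in_unit_cube m Y" unfolding round_invariant_def by simp
  have sum: "(\<Sum>i<m. Y i) = real k" using inv assms(4) unfolding round_invariant_def by simp
  show integral: "Y i \<in> {0, 1}" if "i < m" for i
  proof (cases "oc = Some i")
    case True
    have rest: "\<And>i'. i' \<in> {..<m} - {i} \<Longrightarrow> Y i' \<in> {0, 1}"
      using inv True unfolding round_invariant_def by auto
    have "(\<Sum>i<m. Y i) = Y i + card {i'\<in>{..<m} - {i}. Y i' = 1}"
      using that sum_indicator_eq_card[of "{..<m} - {i}" Y, OF _ rest] by (simp add: sum.remove)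
    then have "Y i = of_int (int k - int (card {i'\<in>{..<m} - {i}. Y i' = 1}))" using sum by simp
    then obtain z :: int where "Y i = of_int z" by blast
    moreover have "0 < Y i" "Y i < 1" using inv True unfolding round_invariant_def frac_def by auto
    ultimately have "0 < z" "z < 1" by auto
    then show ?thesis by simp
  qed (use inv that in \<open>auto simp: round_invariant_def\<close>)
  have "real (card {i\<in>{..<m}. Y i = 1}) = real k"
    using sum_indicator_eq_card[of "{..<m}" Y] integral sum by simp
  moreover have "{i\<in>{..<m}. Y i = 1} = {i. i < m \<and> Y i = 1}" by auto
  ultimately show "card {i. i < m \<and> Y i = 1} = k" by simp
qed

section \<open>Decomposing costs into layers\<close>

definition harm_tail :: "nat \<Rightarrow> nat \<Rightarrow> real" where
  "harm_tail k X = (\<Sum>l\<in>{1..k}. if X < l then 1 / real l else 0)"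

lemma harm_tail_eq: "X \<le> k \<Longrightarrow> harm_tail k X = harm k - harm X"
proof (induction k)
  case 0
  then show ?case by (simp add: harm_tail_def)
next
  case (Suc k)
  show ?case
  proof (cases "X = Suc k")
    case False
    then have "harm_tail (Suc k) X = harm_tail k X + 1 / real (Suc k)"
      using Suc.prems by (simp add: harm_tail_def atLeastAtMostSuc_conv)
    then show ?thesis using False Suc by (simp add: harm_Suc_divide add.commute)
  qed (simp add: harm_tail_def)
qed

lemma harm_tail_le_quadratic:
  assumes "1 \<le> k" "d \<le> k"
  shows "harm_tail k (k - d) \<le> real d / real k + real d * (real d - 1) / (2 * real k)"
  using assms(2)
proof (induction d)
  case 0
  then show ?case by (simp add: harm_tail_def)
next
  case (Suc d)
  have "k - d = Suc (k - Suc d)" using Suc.prems by simp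
  then have "harm (k - d) = harm (k - Suc d) + 1 / real (k - d)"
    by (metis harm_Suc_divide of_nat_Suc add.commute)
  then have "harm_tail k (k - Suc d) = harm_tail k (k - d) + 1 / real (k - d)"
    using Suc.prems by (simp add: harm_tail_eq)
  also have "1 / real (k - d) \<le> (1 + real d) / real k"
  proof -
    have "0 \<le> real d * (real k - real d - 1)" using Suc.prems by simp
    then have "real k \<le> real (k - d) * (1 + real d)"
      using Suc.prems by (simp add: of_nat_diff algebra_simps)
    then show ?thesis using Suc.prems assms(1) by (simp add: field_simps)
  qed
  also have "harm_tail k (k - d) \<le> real d / real k + real d * (real d - 1) / (2 * real k)"
    using Suc by simp
  also have "real d / real k + real d * (real d - 1) / (2 * real k) + (1 + real d) / real k
      = real (Suc d) / real k + real (Suc d) * (real (Suc d) - 1) / (2 * real k)"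
    using assms(1) by (simp add: field_simps)
  finally show ?case by simp
qed

lemma sorted_nth_less_iff_length_filter:
  fixes L :: "'a::linorder list"
  assumes "sorted L" "j < length L"
  shows "L ! j < t \<longleftrightarrow> j < length (filter (\<lambda>x. x < t) L)"
  using assms
proof (induction L arbitrary: j)
  case (Cons x xs)
  show ?case
  proof (cases "x < t")
    case True
    then show ?thesis using Cons by (cases j) auto
  next
    case False
    have below: "\<And>z. z \<in> set xs \<Longrightarrow> \<not> z < t" using Cons.prems False by auto
    then have "filter (\<lambda>x. x < t) xs = []" by (simp add: filter_empty_conv)
    moreover have "\<not> (x # xs) ! j < t"
      using below False Cons.prems by (cases j) auto
    ultimately show ?thesis using False by simp
  qed
qed simp

lemma length_filter_sorted_costs:
  assumes "finite C"
  shows "length (filter (\<lambda>x. x < t) (sorted_costs c C j)) = card {i\<in>C. c i j < t}"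
proof -
  have "length (filter (\<lambda>x. x < t) (sorted_costs c C j))
      = length (filter (\<lambda>i. c i j < t) (sorted_list_of_set C))"
    unfolding sorted_costs_def filter_sort length_sort by (simp add: filter_map comp_def)
  also have "\<dots> = card {i\<in>C. c i j < t}"
    using assms by (simp add: distinct_length_filter Int_def conj_commute)
  finally show ?thesis .
qed

lemma sorted_distinct_nth_telescope:
  fixes w :: "real list"
  assumes "sorted w" "distinct w" "t < length w"
  shows "w ! t = w ! 0 + (\<Sum>s\<in>{1..<length w}. (w ! s - w ! (s - 1)) * (if w ! s \<le> w ! t then 1 else 0))"
proof -
  have "w ! s \<le> w ! t \<longleftrightarrow> s \<le> t" if "s < length w" for s
  proof
    assume "w ! s \<le> w ! t"
    moreover have "w ! t < w ! s" if "t < s"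
      using assms \<open>s < length w\<close> that sorted_nth_mono[of w t s] nth_eq_iff_index_eq[of w t s] by auto
    ultimately show "s \<le> t" by (meson leD not_le)
  qed (use assms that sorted_nth_mono in blast)
  then have "(\<Sum>s\<in>{1..<length w}. (w ! s - w ! (s - 1)) * (if w ! s \<le> w ! t then 1 else 0))
      = (\<Sum>s\<in>{1..t}. w ! s - w ! (s - 1))"
    using assms by (intro sum.mono_neutral_cong_right) auto
  also have "\<dots> = (\<Sum>i<t. w ! Suc i - w ! i)"
  proof -
    have "{1..t} = Suc ` {..<t}" by (simp add: image_Suc_lessThan)
    then show ?thesis by (simp add: sum.reindex)
  qed
  also have "\<dots> = w ! t - w ! 0" by (rule sum_lessThan_telescope)
  finally show ?thesis by simp
qed

definition cost_levels :: "(nat \<Rightarrow> nat \<Rightarrow> real) \<Rightarrow> nat \<Rightarrow> nat \<Rightarrow> real list" where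
  "cost_levels c m j = sorted_list_of_set ((\<lambda>i. c i j) ` {..<m})"

lemma cost_levels_gap_nonneg:
  "s < length (cost_levels c m j) \<Longrightarrow> 0 \<le> cost_levels c m j ! s - cost_levels c m j ! (s - 1)"
  unfolding cost_levels_def by (simp add: sorted_nth_mono)

lemma cost_levels_first_nonneg:
  assumes "0 < m" "\<And>i. i < m \<Longrightarrow> 0 \<le> c i j"
  shows "0 \<le> cost_levels c m j ! 0"
proof -
  have "cost_levels c m j \<noteq> []" using assms(1) by (auto simp: cost_levels_def)
  then have "cost_levels c m j ! 0 \<in> set (cost_levels c m j)" by simp
  then have "cost_levels c m j ! 0 \<in> (\<lambda>i. c i j) ` {..<m}" by (simp add: cost_levels_def)
  then show ?thesis using assms(2) by auto
qed

lemma cost_as_layers: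
  fixes c :: "nat \<Rightarrow> nat \<Rightarrow> real" and m j :: nat
  assumes "x \<in> (\<lambda>i. c i j) ` {..<m}"
  defines "w \<equiv> cost_levels c m j"
  shows "x = w ! 0 + (\<Sum>s\<in>{1..<length w}. (w ! s - w ! (s - 1)) * (if w ! s \<le> x then 1 else 0))"
proof -
  have "x \<in> set w" using assms by (simp add: w_def cost_levels_def)
  then obtain t where "t < length w" "x = w ! t" by (auto simp: in_set_conv_nth)
  then show ?thesis using sorted_distinct_nth_telescope[of w t] by (simp add: w_def cost_levels_def)
qed

lemma ordered_cost_layers:
  fixes c :: "nat \<Rightarrow> nat \<Rightarrow> real" and m j :: nat
  assumes "C \<subseteq> {..<m}" "card C = k"
  defines "w \<equiv> cost_levels c m j"
  shows "ordered_cost c k C j = harm k * w ! 0 +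
     (\<Sum>s\<in>{1..<length w}. (w ! s - w ! (s - 1)) * harm_tail k (card {i\<in>C. c i j < w ! s}))"
proof -
  define L where "L = sorted_costs c C j"
  define gap where "gap s = w ! s - w ! (s - 1)" for s
  define below where "below s = card {i\<in>C. c i j < w ! s}" for s
  have "finite C" using assms(1) finite_subset by blast
  then have L: "length L = k" "sorted L" "set L = (\<lambda>i. c i j) ` C"
    unfolding L_def sorted_costs_def using assms(2) by auto
  have entry: "L ! (l - 1) = w ! 0 + (\<Sum>s\<in>{1..<length w}. gap s * (if below s < l then 1 else 0))"
    if l: "l \<in> {1..k}" for l
  proof -
    have "L ! (l - 1) \<in> set L" using l L(1) by (intro nth_mem) auto
    then have "L ! (l - 1) \<in> (\<lambda>i. c i j) ` {..<m}" using L(3) assms(1) by auto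
    then have "L ! (l - 1) = w ! 0
        + (\<Sum>s\<in>{1..<length w}. (w ! s - w ! (s - 1)) * (if w ! s \<le> L ! (l - 1) then 1 else 0))"
      unfolding w_def by (rule cost_as_layers)
    moreover have "w ! s \<le> L ! (l - 1) \<longleftrightarrow> below s < l" for s
      using sorted_nth_less_iff_length_filter[OF L(2), of "l - 1" "w ! s"] l L(1)
        length_filter_sorted_costs[OF \<open>finite C\<close>]
      unfolding L_def below_def by fastforce
    ultimately show ?thesis unfolding gap_def by simp
  qed
  have "ordered_cost c k C j = (\<Sum>l\<in>{1..k}. (1 / real l) * w ! 0
      + (\<Sum>s\<in>{1..<length w}. gap s * (if below s < l then 1 / real l else 0)))"
    unfolding ordered_cost_def L_def[symmetric] using entry
    by (intro sum.cong refl) (simp add: distrib_left sum_distrib_left mult_ac, intro sum.cong, auto)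
  also have "\<dots> = harm k * w ! 0
      + (\<Sum>l\<in>{1..k}. \<Sum>s\<in>{1..<length w}. gap s * (if below s < l then 1 / real l else 0))"
    by (simp add: sum.distrib sum_distrib_right harm_eq_sum_divide)
  also have "(\<Sum>l\<in>{1..k}. \<Sum>s\<in>{1..<length w}. gap s * (if below s < l then 1 / real l else 0))
      = (\<Sum>s\<in>{1..<length w}. gap s * harm_tail k (below s))"
    unfolding harm_tail_def sum_distrib_left by (rule sum.swap)
  finally show ?thesis unfolding gap_def below_def .
qed

lemma lp_client_cost_layers_ge:
  fixes c :: "nat \<Rightarrow> nat \<Rightarrow> real" and m j :: nat
  assumes cover: "\<And>l. l \<in> {1..k} \<Longrightarrow> 1 \<le> (\<Sum>i<m. x l i j)"
    and "\<And>l i. l \<in> {1..k} \<Longrightarrow> i < m \<Longrightarrow> 0 \<le> x l i j"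
    and "\<And>i. i < m \<Longrightarrow> 0 \<le> c i j" and "0 < m"
  defines "w \<equiv> cost_levels c m j"
  shows "harm k * w ! 0 + (\<Sum>s\<in>{1..<length w}. (w ! s - w ! (s - 1)) *
      (\<Sum>l\<in>{1..k}. (\<Sum>i\<in>{..<m} - {i. i < m \<and> c i j < w ! s}. x l i j) / real l))
    \<le> lp_client_cost m k c x j"
proof -
  define gap where "gap s = w ! s - w ! (s - 1)" for s
  define far where "far s = {..<m} - {i. i < m \<and> c i j < w ! s}" for s
  have far: "(\<Sum>i<m. x l i j * (if w ! s \<le> c i j then 1 else 0)) = (\<Sum>i\<in>far s. x l i j)" for l s
  proof -
    have "(\<Sum>i<m. x l i j * (if w ! s \<le> c i j then 1 else 0))
        = (\<Sum>i<m. if i \<in> far s then x l i j else 0)"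
      unfolding far_def by (intro sum.cong) auto
    also have "\<dots> = (\<Sum>i\<in>far s. x l i j)"
      unfolding far_def by (rule sum.If_cases[THEN trans]) (auto intro: sum.cong)
    finally show ?thesis .
  qed
  have "lp_client_cost m k c x j = (\<Sum>l\<in>{1..k}. \<Sum>i<m. (1 / real l) * x l i j
      * (w ! 0 + (\<Sum>s\<in>{1..<length w}. gap s * (if w ! s \<le> c i j then 1 else 0))))"
    unfolding lp_client_cost_def gap_def w_def using cost_as_layers[of _ c j m]
    by (intro sum.cong refl) auto
  also have "\<dots> = w ! 0 * (\<Sum>l\<in>{1..k}. (1 / real l) * (\<Sum>i<m. x l i j))
      + (\<Sum>s\<in>{1..<length w}. gap s * (\<Sum>l\<in>{1..k}. (\<Sum>i\<in>far s. x l i j) / real l))"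
  proof -
    define F where "F l i s = gap s * ((1 / real l) * (x l i j * (if w ! s \<le> c i j then 1 else 0)))"
      for l i s
    have "(\<Sum>l\<in>{1..k}. \<Sum>i<m. \<Sum>s\<in>{1..<length w}. F l i s)
        = (\<Sum>s\<in>{1..<length w}. \<Sum>l\<in>{1..k}. \<Sum>i<m. F l i s)"
      by (subst sum.swap, rule sum.cong[OF refl], rule sum.swap)
    then show ?thesis
      unfolding F_def far[symmetric]
      by (simp add: distrib_left sum.distrib sum_distrib_left sum_distrib_right sum_divide_distrib mult_ac)
  qed
  finally have eq: "lp_client_cost m k c x j = \<dots>" .
  have "harm k \<le> (\<Sum>l\<in>{1..k}. (1 / real l) * (\<Sum>i<m. x l i j))"
    unfolding harm_eq_sum_divide using cover by (intro sum_mono) (simp add: divide_right_mono)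
  moreover have "0 \<le> w ! 0" unfolding w_def using assms by (intro cost_levels_first_nonneg) auto
  ultimately have "harm k * w ! 0 \<le> w ! 0 * (\<Sum>l\<in>{1..k}. (1 / real l) * (\<Sum>i<m. x l i j))"
    by (subst mult.commute) (rule mult_right_mono)
  then show ?thesis unfolding eq gap_def far_def by simp
qed

section \<open>Bounding the expected cost of one layer\<close>

text \<open>Under \<open>0 \<le> c\<^sub>l \<le> 1\<close> and \<open>\<Sum> c\<^sub>l \<le> \<mu>\<close>, the sum \<open>\<Sum> c\<^sub>l / l\<close> is largest when the
  first \<open>q\<close> slots are filled and the rest of the mass goes to slot \<open>q + 1\<close>.\<close>
lemma greedy_fill_bound:
  fixes c :: "nat \<Rightarrow> real" and q k :: nat
  assumes "q \<le> k" "\<And>l. l \<in> {1..k} \<Longrightarrow> 0 \<le> c l \<and> c l \<le> 1" "(\<Sum>l\<in>{1..k}. c l) \<le> \<mu>"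
  shows "(\<Sum>l\<in>{1..k}. c l / real l) \<le> harm q + (\<mu> - real q) / (real q + 1)"
proof -
  define r where "r = 1 / (real q + 1)"
  have split: "(\<Sum>l\<in>{1..k}. c l / real l)
      = (\<Sum>l\<in>{1..k}. c l * (1 / real l - r)) + r * (\<Sum>l\<in>{1..k}. c l)"
    by (simp add: sum_distrib_left algebra_simps sum.distrib[symmetric] sum_subtractf[symmetric])
  have "(\<Sum>l\<in>{1..k}. c l * (1 / real l - r)) \<le> (\<Sum>l\<in>{1..k}. if l \<le> q then 1 / real l - r else 0)"
  proof (intro sum_mono)
    fix l assume l: "l \<in> {1..k}"
    show "c l * (1 / real l - r) \<le> (if l \<le> q then 1 / real l - r else 0)"
    proof (cases "l \<le> q")
      case True
      have "0 \<le> 1 / real l - r" using True l unfolding r_def by (simp add: field_simps)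
      then show ?thesis using True assms(2)[OF l] by (simp add: mult_left_le_one_le)
    next
      case False
      have "1 / real l \<le> 1 / (real q + 1)" using False l by (intro divide_left_mono) auto
      then have "1 / real l - r \<le> 0" unfolding r_def by simp
      then show ?thesis using False assms(2)[OF l] by (simp add: mult_nonneg_nonpos)
    qed
  qed
  also have "(\<Sum>l\<in>{1..k}. if l \<le> q then 1 / real l - r else 0) = (\<Sum>l\<in>{1..q}. 1 / real l - r)"
    using assms(1) by (intro sum.mono_neutral_cong_right) auto
  also have "\<dots> = harm q - real q * r" by (simp add: sum_subtractf harm_eq_sum_divide)
  finally have weighted_excess: "(\<Sum>l\<in>{1..k}. c l * (1 / real l - r)) \<le> harm q - real q * r" .
  have mass: "r * (\<Sum>l\<in>{1..k}. c l) \<le> r * \<mu>" using assms(3) unfolding r_def by (intro mult_left_mono) auto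
  have rearrange: "harm q - real q * r + r * \<mu> = harm q + (\<mu> - real q) / (real q + 1)"
    unfolding r_def by (simp add: algebra_simps diff_divide_distrib)
  show ?thesis using split weighted_excess mass rearrange by linarith
qed

lemma lp_layer_bound_linear:
  fixes a b :: "nat \<Rightarrow> real"
  assumes "1 \<le> k" "\<And>l. l \<in> {1..k} \<Longrightarrow> 0 \<le> a l \<and> 0 \<le> b l \<and> 1 \<le> a l + b l"
    and "(\<Sum>l\<in>{1..k}. a l) \<le> \<mu>"
  shows "(real k - \<mu>) / real k \<le> (\<Sum>l\<in>{1..k}. b l / real l)"
proof -
  have "(\<Sum>l\<in>{1..k}. (1 - a l) / real k) = (real k - (\<Sum>l\<in>{1..k}. a l)) / real k"
    by (simp add: sum_divide_distrib[symmetric] sum_subtractf)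
  then have "(real k - \<mu>) / real k \<le> (\<Sum>l\<in>{1..k}. (1 - a l) / real k)"
    using assms(1,3) by (simp add: divide_right_mono)
  also have "\<dots> \<le> (\<Sum>l\<in>{1..k}. b l / real l)"
  proof (intro sum_mono)
    fix l assume l: "l \<in> {1..k}"
    have "(1 - a l) / real k \<le> b l / real k" using assms(2)[OF l] by (intro divide_right_mono) auto
    also have "\<dots> \<le> b l / real l" using assms(2)[OF l] l by (intro divide_left_mono) auto
    finally show "(1 - a l) / real k \<le> b l / real l" .
  qed
  finally show ?thesis .
qed

lemma lp_layer_bound_harm:
  fixes a b :: "nat \<Rightarrow> real"
  assumes "\<And>l. l \<in> {1..k} \<Longrightarrow> 0 \<le> a l \<and> 0 \<le> b l \<and> 1 \<le> a l + b l"
    and "(\<Sum>l\<in>{1..k}. a l) \<le> \<mu>"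
  shows "harm k - \<mu> \<le> (\<Sum>l\<in>{1..k}. b l / real l)"
proof -
  have "(\<Sum>l\<in>{1..k}. a l / real l) \<le> (\<Sum>l\<in>{1..k}. a l)"
  proof (intro sum_mono)
    fix l assume l: "l \<in> {1..k}"
    have "a l / real l \<le> a l / 1" using assms(1)[OF l] l by (intro divide_left_mono) auto
    then show "a l / real l \<le> a l" by simp
  qed
  then have "harm k - \<mu> \<le> (\<Sum>l\<in>{1..k}. (1 - a l) / real l)"
    using assms(2) by (simp add: harm_eq_sum_divide diff_divide_distrib sum_subtractf)
  also have "\<dots> \<le> (\<Sum>l\<in>{1..k}. b l / real l)"
  proof (intro sum_mono divide_right_mono)
    fix l assume "l \<in> {1..k}"
    then show "1 - a l \<le> b l" using assms(1) by fastforce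
  qed simp
  finally show ?thesis .
qed

lemma ln_ratio_le_harm_fill:
  fixes \<mu> :: real and q k :: nat
  assumes "0 \<le> \<mu>" "real q \<le> \<mu>" "\<mu> < real q + 1" "q + 1 \<le> k"
  shows "ln ((real k + 1) / (\<mu> + 1)) \<le> harm k - harm q - (\<mu> - real q) / (real q + 1)"
proof -
  have "ln (real k + 1) - ln (real (q + 1) + 1) \<le> harm k - harm (q + 1)"
    using harm_minus_ln_Suc_mono[OF assms(4)] by simp
  moreover have "harm (q + 1) = harm q + 1 / (real q + 1)" by (simp add: harm_Suc_divide)
  moreover have "ln ((real q + 2) / (\<mu> + 1)) \<le> (real q + 2) / (\<mu> + 1) - 1"
    using assms(1) by (intro ln_le_minus_one) auto
  moreover have "(real q + 2) / (\<mu> + 1) - 1 = (1 - (\<mu> - real q)) / (\<mu> + 1)"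
    using assms(1) by (simp add: field_simps)
  moreover have "(1 - (\<mu> - real q)) / (\<mu> + 1) \<le> (1 - (\<mu> - real q)) / (real q + 1)"
    using assms by (intro divide_left_mono) auto
  moreover have "(1 - (\<mu> - real q)) / (real q + 1) = 1 / (real q + 1) - (\<mu> - real q) / (real q + 1)"
    by (simp add: diff_divide_distrib)
  ultimately show ?thesis using assms(1) by (simp add: ln_div add.commute)
qed

lemma lp_layer_bound_ln:
  fixes a b :: "nat \<Rightarrow> real"
  assumes "\<And>l. l \<in> {1..k} \<Longrightarrow> 0 \<le> a l \<and> 0 \<le> b l \<and> 1 \<le> a l + b l"
    and "(\<Sum>l\<in>{1..k}. a l) \<le> \<mu>" and "0 \<le> \<mu>"
  shows "ln ((real k + 1) / (\<mu> + 1)) \<le> (\<Sum>l\<in>{1..k}. b l / real l)"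
proof (cases "real k \<le> \<mu>")
  case True
  then have "ln ((real k + 1) / (\<mu> + 1)) \<le> 0" using assms(3) by (simp add: divide_le_eq)
  moreover have "0 \<le> (\<Sum>l\<in>{1..k}. b l / real l)" using assms(1) by (intro sum_nonneg) auto
  ultimately show ?thesis by linarith
next
  case False
  define q where "q = nat \<lfloor>\<mu>\<rfloor>"
  have q: "real q \<le> \<mu>" "\<mu> < real q + 1" unfolding q_def using assms(3) by linarith+
  have "q + 1 \<le> k" using q False by linarith
  define a' where "a' l = min (a l) 1" for l
  have "(\<Sum>l\<in>{1..k}. a' l) \<le> \<mu>"
    using assms(2) sum_mono[of "{1..k}" a' a] unfolding a'_def by simp
  then have "harm k - harm q - (\<mu> - real q) / (real q + 1) \<le> harm k - (\<Sum>l\<in>{1..k}. a' l / real l)"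
    using greedy_fill_bound[of q k a' \<mu>] \<open>q + 1 \<le> k\<close> assms(1) unfolding a'_def by simp
  also have "\<dots> = (\<Sum>l\<in>{1..k}. (1 - a' l) / real l)"
    by (simp add: harm_eq_sum_divide diff_divide_distrib sum_subtractf)
  also have "\<dots> \<le> (\<Sum>l\<in>{1..k}. b l / real l)"
  proof (intro sum_mono divide_right_mono)
    fix l assume "l \<in> {1..k}"
    then show "1 - a' l \<le> b l" using assms(1) unfolding a'_def by fastforce
  qed simp
  finally show ?thesis using ln_ratio_le_harm_fill[OF assms(3) q \<open>q + 1 \<le> k\<close>] by linarith
qed

lemma harm_small_mean_alpha_bound:
  fixes k :: nat and \<mu> :: real
  assumes "3 \<le> k" "0 \<le> \<mu>" "\<mu> \<le> 1"
  shows "harm k - \<mu> / (1 + \<mu>) \<le> 23589/10000 * (harm k - \<mu>)"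
proof -
  have "harm (3::nat) \<le> (harm k :: real)" using assms by (intro harm_mono) auto
  then have hk: "11/6 \<le> (harm k :: real)" by (simp add: harm_def eval_nat_numeral)
  have "\<mu> - \<mu> / (1 + \<mu>) = \<mu> * \<mu> / (1 + \<mu>)" using assms by (simp add: field_simps)
  also have "\<dots> \<le> 1"
  proof -
    have "\<mu> * \<mu> \<le> 1 * 1" using assms by (intro mult_mono) auto
    then show ?thesis using assms by (simp add: divide_le_eq)
  qed
  finally have "\<mu> - \<mu> / (1 + \<mu>) \<le> 1" .
  moreover have "23589/10000 * (harm k - \<mu>) = 23589/10000 * harm k - 23589/10000 * \<mu>" by (rule right_diff_distrib)
  ultimately show ?thesis using hk assms by linarith
qed

lemma ln_ratio_alpha_bound:
  fixes k :: nat and \<mu> :: real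
  assumes \<mu>: "1 \<le> \<mu>" and nu: "\<mu> + 27/10 < real k"
  shows "ln ((real k + 1) / \<mu>) \<le> 23589/10000 * ln ((real k + 1) / (\<mu> + 1))"
proof -
  define L where "L = ln ((real k + 1) / (\<mu> + 1))"
  have e1: "1 + 1 / \<mu> = (\<mu> + 1) / \<mu>" using \<mu> by (simp add: field_simps)
  have e2: "(real k + 1) / \<mu> = ((real k + 1) / (\<mu> + 1)) * ((\<mu> + 1) / \<mu>)" using \<mu> by (simp add: divide_simps)
  have r: "ln ((real k + 1) / \<mu>) = L + ln (1 + 1 / \<mu>)"
    unfolding L_def e1 e2 using \<mu> by (subst ln_mult) auto
  have l1: "ln (1 + 1 / \<mu>) \<le> 1 / \<mu>" using \<mu> by (intro ln_add_one_self_le_self) auto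
  show ?thesis
  proof (cases "2 \<le> (real k + 1) / (\<mu> + 1)")
    case True
    have "1 / \<mu> \<le> 1" using \<mu> by simp
    moreover have "0 < 1 / \<mu>" using \<mu> by simp
    ultimately have p1: "0 < 1 + 1 / \<mu>" "1 + 1 / \<mu> \<le> 2" by linarith+
    then have "ln (1 + 1 / \<mu>) \<le> ln 2" by (subst ln_le_cancel_iff) auto
    also have "\<dots> \<le> L" unfolding L_def using True by (subst ln_le_cancel_iff) auto
    finally have "ln (1 + 1 / \<mu>) \<le> L" .
    moreover have "0 \<le> ln (1 + 1 / \<mu>)" using p1 \<mu> by simp
    ultimately show ?thesis unfolding r L_def[symmetric] by linarith
  next
    case False
    then have big: "real k - 1 < 2 * \<mu>" using \<mu> by (auto simp: field_simps)
    have k4: "37/10 < real k" using \<mu> nu by simp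
    have Lb: "(real k - \<mu>) / (real k + 1) \<le> L"
    proof -
      have pos: "0 < (real k + 1) / (\<mu> + 1)" using \<mu> by auto
      have "ln (inverse ((real k + 1) / (\<mu> + 1))) \<le> inverse ((real k + 1) / (\<mu> + 1)) - 1"
        using pos \<mu> by (intro ln_le_minus_one) auto
      moreover have "ln ((\<mu> + 1) / (real k + 1)) = - ln ((real k + 1) / (\<mu> + 1))" using \<mu> by (simp add: ln_div)
      ultimately have "1 - (\<mu> + 1) / (real k + 1) \<le> L" unfolding L_def by simp
      moreover have "1 - (\<mu> + 1) / (real k + 1) = (real k - \<mu>) / (real k + 1)" using \<mu> by (simp add: field_simps)
      ultimately show ?thesis by simp
    qed
    have c1: "1 / \<mu> \<le> 2 / (real k - 1)" using big k4 \<mu> by (simp add: field_simps)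
    have c2: "2 / (real k - 1) \<le> 13589/10000 * ((27/10) / (real k + 1))" using k4 by (simp add: field_simps)
    have c3: "(27/10) / (real k + 1) \<le> (real k - \<mu>) / (real k + 1)" using nu by (intro divide_right_mono) auto
    have "1 / \<mu> \<le> 13589/10000 * L" using c1 c2 c3 Lb by linarith
    then show ?thesis unfolding r L_def[symmetric] using l1 by simp
  qed
qed

lemma pmf_expectation_mono_finite:
  fixes f g :: "'a \<Rightarrow> real"
  assumes "finite (set_pmf p)" "\<And>x. x \<in> set_pmf p \<Longrightarrow> f x \<le> g x"
  shows "measure_pmf.expectation p f \<le> measure_pmf.expectation p g"
  using assms
  by (intro integral_mono_AE) (auto simp: AE_measure_pmf_iff intro: integrable_measure_pmf_finite)

lemma rounded_card_split:
  assumes "distinct (leaves T)" "set (leaves T) = {..<m}" "in_unit_cube m y" "(\<Sum>i<m. y i) = real k"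
    and "S \<subseteq> {..<m}" "Y \<in> set_pmf (rounded T y)"
  shows "card {i\<in>S. Y i = 1} + card {i\<in>{..<m} - S. Y i = 1} = k"
proof -
  have "{i. i < m \<and> Y i = 1} = {i\<in>S. Y i = 1} \<union> {i\<in>{..<m} - S. Y i = 1}" using assms(5) by auto
  moreover have "finite {i\<in>S. Y i = 1}" using assms(5) by (auto intro: finite_subset[of _ "{..<m}"])
  ultimately show ?thesis
    using rounded_integral(3)[OF assms(1-4,6)] by (simp add: card_Un_disjoint disjoint_iff)
qed

lemma expected_harm_tail_le_quadratic:
  assumes "1 \<le> k" "S \<subseteq> {..<m}"
    and T: "distinct (leaves T)" "set (leaves T) = {..<m}" and y: "in_unit_cube m y" "(\<Sum>i<m. y i) = real k"
  defines "\<nu> \<equiv> \<Sum>i\<in>{..<m} - S. y i"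
  shows "measure_pmf.expectation (rounded T y) (\<lambda>Y. harm_tail k (card {i\<in>S. Y i = 1}))
    \<le> \<nu> / real k + \<nu>\<^sup>2 / (2 * real k)"
proof -
  define S' where "S' = {..<m} - S"
  define G where "G n = real n / real k + real n * (real n - 1) / (2 * real k)" for n
  have "finite S'" unfolding S'_def by simp
  have "pair_supermartingale m (\<lambda>Y. pbinom_exp S' Y G)"
    using \<open>finite S'\<close> assms(1) unfolding S'_def
    by (intro pair_supermartingale_pbinom_exp) (auto simp: G_def second_diff_def field_simps)
  then have "measure_pmf.expectation (rounded T y) (\<lambda>Y. pbinom_exp S' Y G) \<le> pbinom_exp S' y G"
    using T y by (intro rounded_expectation_le) auto
  moreover have "harm_tail k (card {i\<in>S. Y i = 1}) \<le> pbinom_exp S' Y G" if "Y \<in> set_pmf (rounded T y)" for Y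
  proof -
    have "card {i\<in>S. Y i = 1} = k - card {i\<in>S'. Y i = 1}" "card {i\<in>S'. Y i = 1} \<le> k"
      using rounded_card_split[OF T y assms(2) that] unfolding S'_def by auto
    moreover have "pbinom_exp S' Y G = G (card {i\<in>S'. Y i = 1})"
      using rounded_integral(2)[OF T y that] \<open>finite S'\<close> unfolding S'_def
      by (intro pbinom_exp_integral) auto
    ultimately show ?thesis unfolding G_def using harm_tail_le_quadratic[OF assms(1)] by simp
  qed
  then have "measure_pmf.expectation (rounded T y) (\<lambda>Y. harm_tail k (card {i\<in>S. Y i = 1}))
      \<le> measure_pmf.expectation (rounded T y) (\<lambda>Y. pbinom_exp S' Y G)"
    by (intro pmf_expectation_mono_finite finite_set_pmf_rounded)
  moreover have "pbinom_exp S' y G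
      = \<nu> / real k + pbinom_exp S' y (\<lambda>n. real n * (real n - 1)) / (2 * real k)"
    using pbinom_exp_linear[of S' y "1 / real k" real "1 / (2 * real k)" "\<lambda>n. real n * (real n - 1)"]
      pbinom_exp_of_nat[OF \<open>finite S'\<close>]
    unfolding G_def \<nu>_def S'_def by simp
  moreover have "pbinom_exp S' y (\<lambda>n. real n * (real n - 1)) \<le> \<nu>\<^sup>2"
    using pbinom_exp_falling_factorial_le[OF \<open>finite S'\<close>] y unfolding \<nu>_def S'_def in_unit_cube_def by auto
  then have "pbinom_exp S' y (\<lambda>n. real n * (real n - 1)) / (2 * real k) \<le> \<nu>\<^sup>2 / (2 * real k)"
    by (rule divide_right_mono) simp
  ultimately show ?thesis by linarith
qed

lemma expected_harm_tail_le_harm_gap: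
  assumes "S \<subseteq> {..<m}"
    and T: "distinct (leaves T)" "set (leaves T) = {..<m}" and y: "in_unit_cube m y" "(\<Sum>i<m. y i) = real k"
  shows "measure_pmf.expectation (rounded T y) (\<lambda>Y. harm_tail k (card {i\<in>S. Y i = 1}))
    \<le> harm k - pbinom_exp S y harm"
proof -
  define H where "H n = (harm k - harm n :: real)" for n
  have "finite S" using assms(1) finite_subset by auto
  have "0 \<le> second_diff H n" for n
    using second_diff_harm[of n] by (simp add: H_def second_diff_def)
  then have "pair_supermartingale m (\<lambda>Y. pbinom_exp S Y H)"
    using \<open>finite S\<close> assms(1) by (intro pair_supermartingale_pbinom_exp) auto
  then have "measure_pmf.expectation (rounded T y) (\<lambda>Y. pbinom_exp S Y H) \<le> pbinom_exp S y H"
    using T y by (intro rounded_expectation_le) auto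
  moreover have "harm_tail k (card {i\<in>S. Y i = 1}) = pbinom_exp S Y H" if "Y \<in> set_pmf (rounded T y)" for Y
  proof -
    have "card {i\<in>S. Y i = 1} \<le> k" using rounded_card_split[OF T y assms(1) that] by auto
    moreover have "pbinom_exp S Y H = H (card {i\<in>S. Y i = 1})"
      using rounded_integral(2)[OF T y that] \<open>finite S\<close> assms(1) by (intro pbinom_exp_integral) auto
    ultimately show ?thesis unfolding H_def by (simp add: harm_tail_eq)
  qed
  then have "measure_pmf.expectation (rounded T y) (\<lambda>Y. harm_tail k (card {i\<in>S. Y i = 1}))
      \<le> measure_pmf.expectation (rounded T y) (\<lambda>Y. pbinom_exp S Y H)"
    by (intro pmf_expectation_mono_finite finite_set_pmf_rounded) simp
  moreover have "pbinom_exp S y H = harm k - pbinom_exp S y harm"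
    using pbinom_exp_diff[of S y "\<lambda>_. harm k" harm] pbinom_exp_const[OF \<open>finite S\<close>] unfolding H_def by simp
  ultimately show ?thesis by simp
qed

lemma harm_gap_alpha_bound:
  assumes "finite S" "\<And>i. i \<in> S \<Longrightarrow> 0 \<le> y i \<and> y i \<le> 1"
  defines "\<mu> \<equiv> \<Sum>i\<in>S. y i"
  assumes "1 \<le> k" "\<mu> + 27/10 < real k" "harm k - \<mu> \<le> B" "ln ((real k + 1) / (\<mu> + 1)) \<le> B"
  shows "harm k - pbinom_exp S y harm \<le> 23589/10000 * B"
proof -
  have "0 \<le> \<mu>" unfolding \<mu>_def using assms(2) by (intro sum_nonneg) auto
  show ?thesis
  proof (cases "\<mu> \<le> 1")
    case True
    then have "3 \<le> k" using assms(5) \<open>0 \<le> \<mu>\<close> by linarith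
    have "harm k - pbinom_exp S y harm \<le> harm k - \<mu> / (1 + \<mu>)"
      using pbinom_exp_harm_ge_mean_div[OF assms(1,2)] unfolding \<mu>_def by simp
    also have "\<dots> \<le> 23589/10000 * (harm k - \<mu>)"
      using harm_small_mean_alpha_bound[OF \<open>3 \<le> k\<close> \<open>0 \<le> \<mu>\<close> True] .
    finally show ?thesis using mult_left_mono[OF assms(6), of "23589/10000"] by linarith
  next
    case False
    then have "S \<noteq> {}" "0 < \<mu>" unfolding \<mu>_def by auto
    then have N: "1 \<le> card S" using assms(1) by (simp add: Suc_le_eq card_gt_0_iff)
    have "harm (card S) + ln (\<mu> / real (card S)) \<le> pbinom_exp S y harm"
      using pbinom_exp_harm_ge_ln[OF assms(1,2)] \<open>0 < \<mu>\<close> unfolding \<mu>_def by simp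
    moreover have "ln (\<mu> / real (card S)) = ln \<mu> - ln (real (card S))"
      using \<open>0 < \<mu>\<close> N by (simp add: ln_div)
    moreover have "ln ((real k + 1) / \<mu>) = ln (real k + 1) - ln \<mu>" using \<open>0 < \<mu>\<close> by (simp add: ln_div)
    ultimately have "harm k - pbinom_exp S y harm \<le> ln ((real k + 1) / \<mu>)"
      using harm_diff_le_ln[OF N assms(4)] by linarith
    also have "\<dots> \<le> 23589/10000 * ln ((real k + 1) / (\<mu> + 1))"
      using ln_ratio_alpha_bound[of \<mu> k] False assms(5) by simp
    finally show ?thesis using mult_left_mono[OF assms(7), of "23589/10000"] by linarith
  qed
qed

lemma expected_layer_bound:
  fixes a b :: "nat \<Rightarrow> real"
  assumes "1 \<le> k" "S \<subseteq> {..<m}"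
    and T: "distinct (leaves T)" "set (leaves T) = {..<m}" and y: "in_unit_cube m y" "(\<Sum>i<m. y i) = real k"
    and ab: "\<And>l. l \<in> {1..k} \<Longrightarrow> 0 \<le> a l \<and> 0 \<le> b l \<and> 1 \<le> a l + b l"
    and "(\<Sum>l\<in>{1..k}. a l) \<le> (\<Sum>i\<in>S. y i)"
  shows "measure_pmf.expectation (rounded T y) (\<lambda>Y. harm_tail k (card {i\<in>S. Y i = 1}))
    \<le> 23589/10000 * (\<Sum>l\<in>{1..k}. b l / real l)"
proof -
  define \<mu> where "\<mu> = (\<Sum>i\<in>S. y i)"
  define \<nu> where "\<nu> = (\<Sum>i\<in>{..<m} - S. y i)"
  have "finite S" using assms(2) finite_subset by auto
  have y_S: "\<And>i. i \<in> S \<Longrightarrow> 0 \<le> y i \<and> y i \<le> 1" using y assms(2) by (auto simp: in_unit_cube_def)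
  have "\<mu> + \<nu> = real k" using y(2) sum.subset_diff[OF assms(2), of y] unfolding \<mu>_def \<nu>_def by simp
  have "0 \<le> \<mu>" unfolding \<mu>_def using y_S by (intro sum_nonneg) auto
  have "0 \<le> \<nu>" unfolding \<nu>_def using y by (intro sum_nonneg) (auto simp: in_unit_cube_def)
  show ?thesis
  proof (cases "\<nu> \<le> 27/10")
    case True
    have "\<nu>\<^sup>2 / (2 * real k) = (\<nu> / 2) * (\<nu> / real k)" by (simp add: power2_eq_square)
    also have "\<dots> \<le> 27/20 * (\<nu> / real k)" using True \<open>0 \<le> \<nu>\<close> by (intro mult_right_mono) auto
    finally have "\<nu>\<^sup>2 / (2 * real k) \<le> 27/20 * (\<nu> / real k)" .
    moreover have "0 \<le> \<nu> / real k" using \<open>0 \<le> \<nu>\<close> by simp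
    moreover have "\<nu> / real k \<le> (\<Sum>l\<in>{1..k}. b l / real l)"
    proof -
      have "(real k - \<mu>) / real k \<le> (\<Sum>l\<in>{1..k}. b l / real l)"
        using lp_layer_bound_linear[OF assms(1) ab assms(8)] unfolding \<mu>_def .
      moreover have "real k - \<mu> = \<nu>" using \<open>\<mu> + \<nu> = real k\<close> by linarith
      ultimately show ?thesis by simp
    qed
    ultimately show ?thesis
      using expected_harm_tail_le_quadratic[OF assms(1,2) T y] unfolding \<nu>_def by linarith
  next
    case False
    have "harm k - pbinom_exp S y harm \<le> 23589/10000 * (\<Sum>l\<in>{1..k}. b l / real l)"
      using harm_gap_alpha_bound[OF \<open>finite S\<close> y_S assms(1)] False \<open>\<mu> + \<nu> = real k\<close>
        lp_layer_bound_harm[OF ab assms(8)] lp_layer_bound_ln[OF ab assms(8)] \<open>0 \<le> \<mu>\<close>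
      unfolding \<mu>_def by simp
    then show ?thesis using expected_harm_tail_le_harm_gap[OF assms(2) T y] by linarith
  qed
qed

lemma expected_layer_bound_lp:
  assumes "lp_feasible m n k x y" "j < n" "1 \<le> k" "S \<subseteq> {..<m}"
    and T: "distinct (leaves T)" "set (leaves T) = {..<m}"
  shows "measure_pmf.expectation (rounded T y) (\<lambda>Y. harm_tail k (card {i\<in>S. Y i = 1}))
    \<le> 23589/10000 * (\<Sum>l\<in>{1..k}. (\<Sum>i\<in>{..<m} - S. x l i j) / real l)"
proof (rule expected_layer_bound[OF assms(3,4) T])
  show "in_unit_cube m y" "(\<Sum>i<m. y i) = real k"
    using assms(1) unfolding lp_feasible_def in_unit_cube_def by auto
  show "0 \<le> (\<Sum>i\<in>S. x l i j) \<and> 0 \<le> (\<Sum>i\<in>{..<m} - S. x l i j)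
      \<and> 1 \<le> (\<Sum>i\<in>S. x l i j) + (\<Sum>i\<in>{..<m} - S. x l i j)" if "l \<in> {1..k}" for l
  proof -
    have "1 \<le> (\<Sum>i<m. x l i j)" "\<forall>i<m. 0 \<le> x l i j"
      using assms(1,2) that unfolding lp_feasible_def by auto
    then show ?thesis
      using assms(4) sum.subset_diff[OF assms(4), of "\<lambda>i. x l i j"] by (auto intro!: sum_nonneg)
  qed
  have "(\<Sum>l\<in>{1..k}. \<Sum>i\<in>S. x l i j) = (\<Sum>i\<in>S. \<Sum>l\<in>{1..k}. x l i j)" by (rule sum.swap)
  also have "\<dots> \<le> (\<Sum>i\<in>S. y i)"
    using assms(1,2,4) unfolding lp_feasible_def by (intro sum_mono) auto
  finally show "(\<Sum>l\<in>{1..k}. \<Sum>i\<in>S. x l i j) \<le> (\<Sum>i\<in>S. y i)" .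
qed

lemma expectation_ordered_cost_layers:
  fixes c :: "nat \<Rightarrow> nat \<Rightarrow> real" and m j :: nat
  assumes T: "distinct (leaves T)" "set (leaves T) = {..<m}" and y: "in_unit_cube m y" "(\<Sum>i<m. y i) = real k"
  defines "w \<equiv> cost_levels c m j"
  shows "measure_pmf.expectation (rounded T y) (\<lambda>Y. ordered_cost c k {i. i < m \<and> Y i = 1} j)
    = harm k * w ! 0 + (\<Sum>s\<in>{1..<length w}. (w ! s - w ! (s - 1)) *
        measure_pmf.expectation (rounded T y)
          (\<lambda>Y. harm_tail k (card {i\<in>{i. i < m \<and> c i j < w ! s}. Y i = 1})))"
proof -
  let ?P = "rounded T y"
  have layers: "ordered_cost c k {i. i < m \<and> Y i = 1} j = harm k * w ! 0 + (\<Sum>s\<in>{1..<length w}.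
      (w ! s - w ! (s - 1)) * harm_tail k (card {i\<in>{i. i < m \<and> c i j < w ! s}. Y i = 1}))"
    if "Y \<in> set_pmf ?P" for Y
  proof -
    have "{i\<in>{i. i < m \<and> Y i = 1}. c i j < w ! s} = {i\<in>{i. i < m \<and> c i j < w ! s}. Y i = 1}" for s
      by auto
    then show ?thesis
      using ordered_cost_layers[of "{i. i < m \<and> Y i = 1}" m k c j] rounded_integral(3)[OF T y that]
      unfolding w_def by auto
  qed
  have "measure_pmf.expectation ?P (\<lambda>Y. ordered_cost c k {i. i < m \<and> Y i = 1} j)
      = measure_pmf.expectation ?P (\<lambda>Y. harm k * w ! 0 + (\<Sum>s\<in>{1..<length w}.
          (w ! s - w ! (s - 1)) * harm_tail k (card {i\<in>{i. i < m \<and> c i j < w ! s}. Y i = 1})))"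
    using layers by (intro integral_cong_AE) (auto simp: AE_measure_pmf_iff)
  also have "\<dots> = harm k * w ! 0 + (\<Sum>s\<in>{1..<length w}. (w ! s - w ! (s - 1)) *
      measure_pmf.expectation ?P (\<lambda>Y. harm_tail k (card {i\<in>{i. i < m \<and> c i j < w ! s}. Y i = 1})))"
    by (simp add: integrable_measure_pmf_finite[OF finite_set_pmf_rounded])
  finally show ?thesis .
qed

lemma expected_ordered_cost_le_layers:
  fixes c :: "nat \<Rightarrow> nat \<Rightarrow> real" and m j :: nat
  assumes "lp_feasible m n k x y" "j < n" "1 \<le> k"
    and T: "distinct (leaves T)" "set (leaves T) = {..<m}"
  defines "w \<equiv> cost_levels c m j"
  shows "measure_pmf.expectation (rounded T y) (\<lambda>Y. ordered_cost c k {i. i < m \<and> Y i = 1} j)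
    \<le> harm k * w ! 0 + 23589/10000 * (\<Sum>s\<in>{1..<length w}. (w ! s - w ! (s - 1)) *
      (\<Sum>l\<in>{1..k}. (\<Sum>i\<in>{..<m} - {i. i < m \<and> c i j < w ! s}. x l i j) / real l))"
proof -
  define near where "near s = {i. i < m \<and> c i j < w ! s}" for s
  define level where "level s = (\<Sum>l\<in>{1..k}. (\<Sum>i\<in>{..<m} - near s. x l i j) / real l)" for s
  have y: "in_unit_cube m y" "(\<Sum>i<m. y i) = real k"
    using assms(1) unfolding lp_feasible_def in_unit_cube_def by auto
  have "measure_pmf.expectation (rounded T y) (\<lambda>Y. harm_tail k (card {i\<in>near s. Y i = 1}))
      \<le> 23589/10000 * level s" for s
    using expected_layer_bound_lp[OF assms(1-3) _ T, of "near s"] unfolding near_def level_def by auto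
  then have "measure_pmf.expectation (rounded T y) (\<lambda>Y. ordered_cost c k {i. i < m \<and> Y i = 1} j)
      \<le> harm k * w ! 0 + (\<Sum>s\<in>{1..<length w}. (w ! s - w ! (s - 1)) * (23589/10000 * level s))"
    unfolding expectation_ordered_cost_layers[OF T y] w_def[symmetric] near_def[symmetric]
    using cost_levels_gap_nonneg[of _ c m j] unfolding w_def
    by (intro add_left_mono sum_mono mult_left_mono) auto
  also have "\<dots> = harm k * w ! 0 + 23589/10000 * (\<Sum>s\<in>{1..<length w}. (w ! s - w ! (s - 1)) * level s)"
    by (simp only: sum_distrib_left mult.left_commute)
  finally show ?thesis unfolding level_def near_def .
qed

theorem lemma2:
  fixes m n k :: nat
    and c :: "nat \<Rightarrow> nat \<Rightarrow> real"
    and xs :: "nat \<Rightarrow> nat \<Rightarrow> nat \<Rightarrow> real"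
    and ys :: "nat \<Rightarrow> real"
    and T :: ttree
    and j :: nat
  assumes "k \<le> m"
    and "\<forall>i<m. \<forall>j'<n. 0 \<le> c i j'"
    and "lp_optimal m n k c xs ys"
    and "distinct (leaves T)" and "set (leaves T) = {..<m}"
    and "j < n"
  shows "measure_pmf.expectation (rounded T ys)
           (\<lambda>Y. ordered_cost c k {i. i < m \<and> Y i = 1} j)
         \<le> 2.3589 * lp_client_cost m k c xs j"
proof (cases "k = 0")
  case True
  then show ?thesis by (simp add: ordered_cost_def lp_client_cost_def)
next
  case False
  have feas: "lp_feasible m n k xs ys" using assms(3) by (simp add: lp_optimal_def)
  define w where "w = cost_levels c m j"
  define level where
    "level s = (\<Sum>l\<in>{1..k}. (\<Sum>i\<in>{..<m} - {i. i < m \<and> c i j < w ! s}. xs l i j) / real l)" for s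
  have "0 \<le> harm k * w ! 0"
    using cost_levels_first_nonneg[of m c j] assms(1,2,6) False unfolding w_def
    by (intro mult_nonneg_nonneg harm_nonneg) auto
  have "measure_pmf.expectation (rounded T ys) (\<lambda>Y. ordered_cost c k {i. i < m \<and> Y i = 1} j)
      \<le> harm k * w ! 0 + 23589/10000 * (\<Sum>s\<in>{1..<length w}. (w ! s - w ! (s - 1)) * level s)"
    using expected_ordered_cost_le_layers[OF feas assms(6) _ assms(4,5)] False
    unfolding w_def level_def by simp
  also have "\<dots> \<le> 23589/10000 * (harm k * w ! 0 + (\<Sum>s\<in>{1..<length w}. (w ! s - w ! (s - 1)) * level s))"
    using \<open>0 \<le> harm k * w ! 0\<close> by (simp add: distrib_left)
  also have "\<dots> \<le> 23589/10000 * lp_client_cost m k c xs j"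
    using lp_client_cost_layers_ge[where c=c and m=m and j=j and k=k and x=xs] feas assms(1,2,6) False
    unfolding lp_feasible_def level_def w_def by simp
  finally show ?thesis by simp
qed

end
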